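(* Let $(V,q)$ be a quadratic space over $F$ of dimension $2n+1$ with Witt index $n$, and let $a\in\mathcal{O}\smallsetminus\{0\}$ with $\mathrm{val}_\mathfrak{p}(a)\in\{0,1\}$. Let $L_1$ and $L_2$ be two lattices of type $a$ in $(V,q)$. Let $W$ be a totally isotropic subspace of $V$ and $\{0\}\subset W_1\subset\cdots\subset W_n=W$ a complete flag of $W$. Then there exists $g\in\mathrm{SO}(V,q)$ such that $g(L_1)=L_2$ and $g(W_i)=W_i$ for all $i\in\{1,\dots,n\}$.
   Context: $F$ is a non-archimedean local field of characteristic $0$ with ring of integers $\mathcal{O}$ and maximal ideal $\mathfrak{p}$; $\langle x,y\rangle=q(x+y)-q(x)-q(y)$ is the bilinear form of $q$. A lattice $L$ of $V$ is of type $a$ if it has an $\mathcal{O}$-basis $(e_1,\dots,e_n,v_0,f_n,\dots,f_1)$ with $\langle e_i,e_j\rangle=\langle e_i,v_0\rangle=\langle f_i,f_j\rangle=\langle f_i,v_0\rangle=0$, $\langle e_i,f_j\rangle=\delta_{ij}$, $\langle v_0,v_0\rangle=2a$. *)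

theory Defs
  imports "Jordan_Normal_Form.Determinant"
begin

(* v is a normalized discrete valuation: v x is meaningful only for x \<noteq> 0 *)
definition discrete_valuation :: "('a::field \<Rightarrow> int) \<Rightarrow> bool" where
  "discrete_valuation v \<longleftrightarrow>
     (\<forall>x y. x \<noteq> 0 \<longrightarrow> y \<noteq> 0 \<longrightarrow> v (x * y) = v x + v y) \<and>
     (\<forall>x y. x \<noteq> 0 \<longrightarrow> y \<noteq> 0 \<longrightarrow> x + y \<noteq> 0 \<longrightarrow> v (x + y) \<ge> min (v x) (v y)) \<and>
     (\<forall>k. \<exists>x. x \<noteq> 0 \<and> v x = k)"

(* "x - y has valuation at least k", with v(0) = +infinity *)
definition val_close :: "('a::field \<Rightarrow> int) \<Rightarrow> int \<Rightarrow> 'a \<Rightarrow> 'a \<Rightarrow> bool" where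
  "val_close v k x y \<longleftrightarrow> x = y \<or> v (x - y) \<ge> k"

definition val_ring :: "('a::field \<Rightarrow> int) \<Rightarrow> 'a set" where
  "val_ring v = {x. x = 0 \<or> v x \<ge> 0}"

definition val_ideal :: "('a::field \<Rightarrow> int) \<Rightarrow> 'a set" where
  "val_ideal v = {x. x = 0 \<or> v x \<ge> 1}"

definition nonarch_local_field :: "('a::field_char_0 \<Rightarrow> int) \<Rightarrow> bool" where
  "nonarch_local_field v \<longleftrightarrow>
     discrete_valuation v \<and>
     (\<forall>s :: nat \<Rightarrow> 'a. (\<forall>k. \<exists>M. \<forall>m\<ge>M. \<forall>m'\<ge>M. val_close v k (s m) (s m')) \<longrightarrow>
        (\<exists>l. \<forall>k. \<exists>M. \<forall>m\<ge>M. val_close v k (s m) l)) \<and>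
     (\<exists>R. finite R \<and> R \<subseteq> val_ring v \<and> (\<forall>x\<in>val_ring v. \<exists>r\<in>R. x - r \<in> val_ideal v))"

definition lin_indep :: "nat \<Rightarrow> 'a::field vec list \<Rightarrow> bool" where
  "lin_indep N bs \<longleftrightarrow> (\<forall>c \<in> carrier_vec (length bs).
      mat_of_cols N bs *\<^sub>v c = 0\<^sub>v N \<longrightarrow> c = 0\<^sub>v (length bs))"

definition fspan :: "nat \<Rightarrow> 'a::field vec list \<Rightarrow> 'a vec set" where
  "fspan N bs = {mat_of_cols N bs *\<^sub>v c | c. c \<in> carrier_vec (length bs)}"

definition rspan :: "'a set \<Rightarrow> nat \<Rightarrow> 'a::field vec list \<Rightarrow> 'a vec set" where
  "rspan Rg N bs = {mat_of_cols N bs *\<^sub>v c | c. c \<in> carrier_vec (length bs) \<and> (\<forall>i < length bs. c $ i \<in> Rg)}"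

definition is_subspace :: "nat \<Rightarrow> 'a::field vec set \<Rightarrow> bool" where
  "is_subspace N S \<longleftrightarrow> S \<subseteq> carrier_vec N \<and> 0\<^sub>v N \<in> S \<and>
     (\<forall>x\<in>S. \<forall>y\<in>S. x + y \<in> S) \<and> (\<forall>c. \<forall>x\<in>S. c \<cdot>\<^sub>v x \<in> S)"

definition subspace_dim :: "nat \<Rightarrow> 'a::field vec set \<Rightarrow> nat \<Rightarrow> bool" where
  "subspace_dim N S k \<longleftrightarrow> is_subspace N S \<and>
     (\<exists>bs. length bs = k \<and> set bs \<subseteq> carrier_vec N \<and> lin_indep N bs \<and> S = fspan N bs)"

definition bil :: "('a::field vec \<Rightarrow> 'a) \<Rightarrow> 'a vec \<Rightarrow> 'a vec \<Rightarrow> 'a" where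
  "bil q x y = q (x + y) - q x - q y"

definition quadratic_form :: "nat \<Rightarrow> ('a::field vec \<Rightarrow> 'a) \<Rightarrow> bool" where
  "quadratic_form N q \<longleftrightarrow>
     (\<forall>c. \<forall>x\<in>carrier_vec N. q (c \<cdot>\<^sub>v x) = c^2 * q x) \<and>
     (\<forall>x\<in>carrier_vec N. \<forall>y\<in>carrier_vec N. \<forall>z\<in>carrier_vec N.
         bil q (x + y) z = bil q x z + bil q y z) \<and>
     (\<forall>c. \<forall>x\<in>carrier_vec N. \<forall>z\<in>carrier_vec N. bil q (c \<cdot>\<^sub>v x) z = c * bil q x z)"

definition nondegenerate :: "nat \<Rightarrow> ('a::field vec \<Rightarrow> 'a) \<Rightarrow> bool" where
  "nondegenerate N q \<longleftrightarrow>
     (\<forall>x\<in>carrier_vec N. (\<forall>y\<in>carrier_vec N. bil q x y = 0) \<longrightarrow> x = 0\<^sub>v N)"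

definition quadratic_space :: "nat \<Rightarrow> ('a::field vec \<Rightarrow> 'a) \<Rightarrow> bool" where
  "quadratic_space N q \<longleftrightarrow> quadratic_form N q \<and> nondegenerate N q"

definition totally_isotropic :: "nat \<Rightarrow> ('a::field vec \<Rightarrow> 'a) \<Rightarrow> 'a vec set \<Rightarrow> bool" where
  "totally_isotropic N q W \<longleftrightarrow> is_subspace N W \<and> (\<forall>x\<in>W. q x = 0)"

definition witt_index :: "nat \<Rightarrow> ('a::field vec \<Rightarrow> 'a) \<Rightarrow> nat \<Rightarrow> bool" where
  "witt_index N q m \<longleftrightarrow>
     (\<exists>W. totally_isotropic N q W \<and> subspace_dim N W m) \<and>
     (\<forall>W k. totally_isotropic N q W \<longrightarrow> subspace_dim N W k \<longrightarrow> k \<le> m)"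

(* L is a lattice of type a: it has an O-basis (e_1..e_n, v_0, f_n..f_1) of V with the
   prescribed Gram matrix.  Indices e_1..e_n are e 0 .. e (n-1). *)
definition lattice_of_type ::
  "('a::field \<Rightarrow> int) \<Rightarrow> nat \<Rightarrow> ('a vec \<Rightarrow> 'a) \<Rightarrow> nat \<Rightarrow> 'a \<Rightarrow> 'a vec set \<Rightarrow> bool" where
  "lattice_of_type v N q n a L \<longleftrightarrow>
     (\<exists>e f v0. (\<forall>i<n. e i \<in> carrier_vec N \<and> f i \<in> carrier_vec N) \<and> v0 \<in> carrier_vec N \<and>
        (\<forall>i<n. \<forall>j<n. bil q (e i) (e j) = 0 \<and> bil q (f i) (f j) = 0 \<and>
                     bil q (e i) (f j) = (if i = j then 1 else 0)) \<and>
        (\<forall>i<n. bil q (e i) v0 = 0 \<and> bil q (f i) v0 = 0) \<and>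
        bil q v0 v0 = 2 * a \<and>
        (let bs = map e [0..<n] @ [v0] @ rev (map f [0..<n]) in
           lin_indep N bs \<and> fspan N bs = carrier_vec N \<and> L = rspan (val_ring v) N bs))"

definition SO_group :: "nat \<Rightarrow> ('a::field vec \<Rightarrow> 'a) \<Rightarrow> 'a mat set" where
  "SO_group N q = {G \<in> carrier_mat N N. det G = 1 \<and> (\<forall>x\<in>carrier_vec N. q (G *\<^sub>v x) = q x)}"

end

theory Submission
  imports Defs
begin

text \<open>
  A lattice of type \<open>a\<close> is the \<open>\<O>\<close>-span of a basis \<open>B 0, \<dots>, B (2*n)\<close> with the standard
  Gram matrix, and the linear map sending one such basis to another is an isometry; multiplied by
  its determinant \<open>\<plusminus>1\<close> it lies in \<open>SO(V)\<close> because \<open>dim V\<close> is odd. So it suffices to find,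
  for every lattice of type \<open>a\<close>, a standard basis whose first \<open>i\<close> vectors span \<open>W\<^sub>i\<close>.
  This is done one step at a time: if the basis is adapted up to \<open>W\<^sub>k\<close>, take a primitive vector
  \<open>u \<in> W\<^sub>k\<^sub>+\<^sub>1\<close> with no components along \<open>B 0, \<dots>, B (k - 1)\<close>. Orthogonality to \<open>W\<^sub>k\<close> kills
  its components beyond \<open>B (2*n - k)\<close>, and because \<open>val a \<le> 1\<close> some component other than the
  middle one is a unit. After permuting the basis this unit sits at position \<open>k\<close>, and an Eichler
  transformation replaces \<open>B k\<close> by \<open>u\<close> without changing the lattice.
\<close>

section \<open>Discrete valuations\<close>

definition val_ge :: "('a::field \<Rightarrow> int) \<Rightarrow> int \<Rightarrow> 'a set" where
  "val_ge v k = {x. x = 0 \<or> k \<le> v x}"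

lemma val_ring_eq_val_ge: "val_ring v = val_ge v 0"
  by (auto simp: val_ring_def val_ge_def)

lemma val_ring_0 [simp]: "0 \<in> val_ring v"
  by (simp add: val_ring_def)

locale discrete_val =
  fixes v :: "'a::field \<Rightarrow> int"
  assumes discrete: "discrete_valuation v"
begin

lemma val_mult: "x \<noteq> 0 \<Longrightarrow> y \<noteq> 0 \<Longrightarrow> v (x * y) = v x + v y"
  using discrete unfolding discrete_valuation_def by blast

lemma val_add: "x \<noteq> 0 \<Longrightarrow> y \<noteq> 0 \<Longrightarrow> x + y \<noteq> 0 \<Longrightarrow> min (v x) (v y) \<le> v (x + y)"
  using discrete unfolding discrete_valuation_def by blast

lemma val_one [simp]: "v 1 = 0"
  using val_mult[of 1 1] by simp

lemma val_uminus [simp]: "v (- x) = v x"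
proof (cases "x = 0")
  case False
  have "v (-1) = 0" using val_mult[of "-1" "-1"] by simp
  then show ?thesis using val_mult[of "-1" x] False by simp
qed simp

lemma val_divide: "x \<noteq> 0 \<Longrightarrow> y \<noteq> 0 \<Longrightarrow> v (y / x) = v y - v x"
  using val_mult[of "y / x" x] by simp

lemma val_ge_0 [simp]: "0 \<in> val_ge v k"
  by (simp add: val_ge_def)

lemma val_ge_add: "x \<in> val_ge v k \<Longrightarrow> y \<in> val_ge v k \<Longrightarrow> x + y \<in> val_ge v k"
  using val_add[of x y] by (fastforce simp: val_ge_def)

lemma val_ge_uminus: "x \<in> val_ge v k \<Longrightarrow> - x \<in> val_ge v k"
  by (simp add: val_ge_def)

lemma val_ge_mult: "x \<in> val_ge v k \<Longrightarrow> y \<in> val_ge v l \<Longrightarrow> x * y \<in> val_ge v (k + l)"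
  by (cases "x = 0"; cases "y = 0") (auto simp: val_ge_def val_mult)

lemma val_ge_sum: "(\<And>i. i \<in> S \<Longrightarrow> f i \<in> val_ge v k) \<Longrightarrow> sum f S \<in> val_ge v k"
  by (induction S rule: infinite_finite_induct) (auto intro: val_ge_add)

lemma val_ring_1 [simp]: "1 \<in> val_ring v"
  by (simp add: val_ring_def)

lemma val_ring_add: "x \<in> val_ring v \<Longrightarrow> y \<in> val_ring v \<Longrightarrow> x + y \<in> val_ring v"
  by (simp add: val_ring_eq_val_ge val_ge_add)

lemma val_ring_uminus: "x \<in> val_ring v \<Longrightarrow> - x \<in> val_ring v"
  by (simp add: val_ring_eq_val_ge val_ge_uminus)

lemma val_ring_mult: "x \<in> val_ring v \<Longrightarrow> y \<in> val_ring v \<Longrightarrow> x * y \<in> val_ring v"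
  using val_ge_mult[of x 0 y 0] by (simp add: val_ring_eq_val_ge)

lemma divide_in_val_ring: "x \<noteq> 0 \<Longrightarrow> y = 0 \<or> v x \<le> v y \<Longrightarrow> y / x \<in> val_ring v"
  by (cases "y = 0") (auto simp: val_ring_def val_divide)

lemma divide_unit_in_val_ring: "y \<in> val_ring v \<Longrightarrow> x \<noteq> 0 \<Longrightarrow> v x = 0 \<Longrightarrow> y / x \<in> val_ring v"
  by (rule divide_in_val_ring) (auto simp: val_ring_def)

lemma exists_min_val_divisor:
  assumes "finite I" and "\<exists>i\<in>I. c i \<noteq> 0"
  obtains m where "m \<in> I" "c m \<noteq> 0" "\<forall>i\<in>I. c i / c m \<in> val_ring v"
proof -
  let ?S = "v ` c ` {i\<in>I. c i \<noteq> 0}"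
  have S: "finite ?S" "?S \<noteq> {}" using assms by auto
  obtain m where m: "m \<in> I" "c m \<noteq> 0" "v (c m) = Min ?S"
    using Min_in[OF S] by auto
  have "v (c m) \<le> v (c i)" if "i \<in> I" "c i \<noteq> 0" for i
    using m(3) S(1) that by simp
  then have "\<forall>i\<in>I. c i / c m \<in> val_ring v"
    using m(2) by (auto intro!: divide_in_val_ring)
  with m show ?thesis using that by blast
qed

end

section \<open>Linear combinations in \<open>F\<^sup>N\<close>\<close>

definition lin_comb :: "nat \<Rightarrow> nat \<Rightarrow> (nat \<Rightarrow> 'a::comm_ring_1) \<Rightarrow> (nat \<Rightarrow> 'a vec) \<Rightarrow> 'a vec" where
  "lin_comb N K c B = vec N (\<lambda>r. \<Sum>i<K. c i * B i $ r)"

lemma lin_comb_carrier [simp]: "lin_comb N K c B \<in> carrier_vec N"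
  and dim_lin_comb [simp]: "dim_vec (lin_comb N K c B) = N"
  by (simp_all add: lin_comb_def)

lemma index_lin_comb [simp]: "r < N \<Longrightarrow> lin_comb N K c B $ r = (\<Sum>i<K. c i * B i $ r)"
  by (simp add: lin_comb_def)

lemma lin_comb_0 [simp]: "lin_comb N 0 c B = 0\<^sub>v N"
  by (rule eq_vecI) auto

lemma lin_comb_Suc: "B K \<in> carrier_vec N \<Longrightarrow> lin_comb N (Suc K) c B = lin_comb N K c B + c K \<cdot>\<^sub>v B K"
  by (rule eq_vecI) auto

lemma lin_comb_cong:
  "(\<And>i. i < K \<Longrightarrow> c i = d i) \<Longrightarrow> (\<And>i. i < K \<Longrightarrow> B i = C i) \<Longrightarrow> lin_comb N K c B = lin_comb N K d C"
  by (rule eq_vecI) auto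

lemma lin_comb_cong_nonzero:
  assumes "\<And>i. i < K \<Longrightarrow> c i \<noteq> 0 \<Longrightarrow> B i = C i"
  shows "lin_comb N K c B = lin_comb N K c C"
proof -
  have "c i * B i $ r = c i * C i $ r" if "i < K" for i r
    using assms[OF that] by (cases "c i = 0") auto
  then show ?thesis by (intro eq_vecI) auto
qed

lemma lin_comb_zero_coeffs [simp]: "lin_comb N K (\<lambda>_. 0) B = 0\<^sub>v N"
  by (rule eq_vecI) auto

lemma lin_comb_add: "lin_comb N K c B + lin_comb N K d B = lin_comb N K (\<lambda>i. c i + d i) B"
  by (rule eq_vecI) (auto simp: sum.distrib algebra_simps)

lemma lin_comb_smult: "s \<cdot>\<^sub>v lin_comb N K c B = lin_comb N K (\<lambda>i. s * c i) B"
  by (rule eq_vecI) (auto simp: sum_distrib_left algebra_simps)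

lemma lin_comb_extend:
  assumes "K \<le> M"
  shows "lin_comb N K c B = lin_comb N M (\<lambda>i. if i < K then c i else 0) B"
proof (rule eq_vecI)
  fix r assume "r < dim_vec (lin_comb N M (\<lambda>i. if i < K then c i else 0) B)"
  have "{..<K} = {..<M} \<inter> {i. i < K}" using assms by auto
  then have "(\<Sum>i<K. c i * B i $ r) = (\<Sum>i<M. if i < K then c i * B i $ r else 0)"
    by (simp add: sum.inter_restrict)
  with \<open>r < _\<close> show "lin_comb N K c B $ r = lin_comb N M (\<lambda>i. if i < K then c i else 0) B $ r"
    by (auto intro: sum.cong)
qed simp

lemma lin_comb_single:
  assumes "j < K" "B j \<in> carrier_vec N"
  shows "lin_comb N K (\<lambda>i. if i = j then s else 0) B = s \<cdot>\<^sub>v B j"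
proof -
  have "(\<Sum>i<K. (if i = j then s else 0) * B i $ r) = s * B j $ r" for r
    using assms(1) by (simp add: if_distrib[of "\<lambda>x. x * _"] sum.delta cong: if_cong)
  then show ?thesis using assms(2) by (intro eq_vecI) auto
qed

lemma lin_comb_split:
  assumes "j < K" "B j \<in> carrier_vec N"
  shows "lin_comb N K c B = lin_comb N K (\<lambda>i. if i = j then 0 else c i) B + c j \<cdot>\<^sub>v B j"
proof -
  have "lin_comb N K c B = lin_comb N K (\<lambda>i. (if i = j then 0 else c i) + (if i = j then c j else 0)) B"
    by (rule lin_comb_cong) auto
  also have "\<dots> = lin_comb N K (\<lambda>i. if i = j then 0 else c i) B + lin_comb N K (\<lambda>i. if i = j then c j else 0) B"
    by (rule lin_comb_add[symmetric])
  also have "lin_comb N K (\<lambda>i. if i = j then c j else 0) B = c j \<cdot>\<^sub>v B j"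
    using assms by (rule lin_comb_single)
  finally show ?thesis .
qed

lemma mult_mat_lin_comb:
  fixes G :: "'a::field mat"
  assumes "G \<in> carrier_mat N N" and "\<And>i. i < K \<Longrightarrow> B i \<in> carrier_vec N"
  shows "G *\<^sub>v lin_comb N K c B = lin_comb N K c (\<lambda>i. G *\<^sub>v B i)"
  using assms(2)
proof (induction K)
  case 0
  show ?case using assms(1) by (intro eq_vecI) (auto simp: scalar_prod_def)
next
  case (Suc K)
  have "G *\<^sub>v (c K \<cdot>\<^sub>v B K) = c K \<cdot>\<^sub>v (G *\<^sub>v B K)"
    using assms(1) Suc.prems by (intro mult_mat_vec) auto
  with Suc show ?case
    using assms(1) by (simp add: lin_comb_Suc mult_add_distrib_mat_vec)
qed

lemma mat_of_cols_mult_vec: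
  assumes "c \<in> carrier_vec (length bs)"
  shows "mat_of_cols N bs *\<^sub>v c = lin_comb N (length bs) (\<lambda>i. c $ i) (\<lambda>i. bs ! i)"
  using assms by (intro eq_vecI)
    (auto simp: scalar_prod_def mat_of_cols_def row_def atLeast0LessThan mult.commute intro!: sum.cong)

lemma lin_comb_in_subspace:
  assumes "is_subspace N S" and "\<And>i. i < K \<Longrightarrow> B i \<in> S"
  shows "lin_comb N K c B \<in> S"
  using assms(2)
proof (induction K)
  case 0
  then show ?case using assms(1) by (simp add: is_subspace_def)
next
  case (Suc K)
  have "B K \<in> carrier_vec N" using Suc.prems assms(1) by (auto simp: is_subspace_def)
  then show ?case using Suc assms(1) by (simp add: lin_comb_Suc is_subspace_def)
qed

lemma vecs_lin_dependent:
  fixes cs :: "nat \<Rightarrow> 'a::field vec"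
  assumes cs: "\<And>j. j \<le> m \<Longrightarrow> cs j \<in> carrier_vec m"
  obtains e where "\<exists>j\<le>m. e j \<noteq> 0" "\<And>r. r < m \<Longrightarrow> (\<Sum>j\<le>m. e j * cs j $ r) = 0"
proof -
  \<comment> \<open>the vectors \<open>cs j\<close> as columns, padded by a zero row, form a singular square matrix\<close>
  define C where "C = mat\<^sub>r (Suc m) (Suc m) (\<lambda>r. if r = m then 0\<^sub>v (Suc m) else vec (Suc m) (\<lambda>j. cs j $ r))"
  have C: "C \<in> carrier_mat (Suc m) (Suc m)" unfolding C_def by simp
  have "det C = 0" unfolding C_def by (rule det_row_0) auto
  then obtain e where e: "e \<in> carrier_vec (Suc m)" "e \<noteq> 0\<^sub>v (Suc m)" "C *\<^sub>v e = 0\<^sub>v (Suc m)"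
    using det_0_iff_vec_prod_zero[OF C] by blast
  have "\<exists>j\<le>m. e $ j \<noteq> 0"
  proof (rule ccontr)
    assume "\<not> ?thesis"
    then have "e = 0\<^sub>v (Suc m)" using e(1) by (intro eq_vecI) auto
    with e(2) show False by contradiction
  qed
  moreover have "(\<Sum>j\<le>m. e $ j * cs j $ r) = 0" if "r < m" for r
  proof -
    have "(C *\<^sub>v e) $ r = (\<Sum>j<Suc m. cs j $ r * e $ j)"
      using that e(1) unfolding C_def by (auto simp: scalar_prod_def atLeast0LessThan)
    then show ?thesis using e(3) that by (simp add: lessThan_Suc_atMost mult.commute)
  qed
  ultimately show ?thesis by (rule that[of "\<lambda>j. e $ j"])
qed

lemma fspan_lin_dependent:
  assumes len: "length bs = m" and z: "\<And>j. j \<le> m \<Longrightarrow> z j \<in> fspan N bs"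
  obtains e where "\<exists>j\<le>m. e j \<noteq> 0" "lin_comb N (Suc m) e z = 0\<^sub>v N"
proof -
  have "\<forall>j. \<exists>c. j \<le> m \<longrightarrow> c \<in> carrier_vec m \<and> z j = mat_of_cols N bs *\<^sub>v c"
    using z len unfolding fspan_def by blast
  then obtain cs where cs: "\<And>j. j \<le> m \<Longrightarrow> cs j \<in> carrier_vec m \<and> z j = mat_of_cols N bs *\<^sub>v cs j"
    by metis
  obtain e where e: "\<exists>j\<le>m. e j \<noteq> 0" and rel: "\<And>r. r < m \<Longrightarrow> (\<Sum>j\<le>m. e j * cs j $ r) = 0"
    using vecs_lin_dependent[of m cs] cs by blast
  have "lin_comb N (Suc m) e z = 0\<^sub>v N"
  proof (rule eq_vecI)
    fix s assume "s < dim_vec (0\<^sub>v N :: 'a vec)"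
    then have s: "s < N" by simp
    have "z j $ s = (\<Sum>r<m. bs ! r $ s * cs j $ r)" if "j \<le> m" for j
      using cs[OF that] len s by (simp add: mat_of_cols_mult_vec mult.commute)
    then have "lin_comb N (Suc m) e z $ s = (\<Sum>j\<le>m. e j * (\<Sum>r<m. bs ! r $ s * cs j $ r))"
      using s by (simp add: lessThan_Suc_atMost)
    also have "\<dots> = (\<Sum>j\<le>m. \<Sum>r<m. bs ! r $ s * (e j * cs j $ r))"
      by (simp add: sum_distrib_left algebra_simps)
    also have "\<dots> = (\<Sum>r<m. \<Sum>j\<le>m. bs ! r $ s * (e j * cs j $ r))"
      by (rule sum.swap)
    also have "\<dots> = (\<Sum>r<m. bs ! r $ s * (\<Sum>j\<le>m. e j * cs j $ r))"
      by (simp only: sum_distrib_left)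
    also have "\<dots> = 0" using rel by simp
    finally show "lin_comb N (Suc m) e z $ s = 0\<^sub>v N $ s" using s by simp
  qed simp
  with e show ?thesis by (rule that)
qed

lemma fspan_in_lin_comb_span:
  assumes len: "length bs = m"
    and B: "\<And>j. j < m \<Longrightarrow> B j \<in> fspan N bs"
    and indep: "\<And>e. lin_comb N m e B = 0\<^sub>v N \<Longrightarrow> \<forall>j<m. e j = 0"
    and y: "y \<in> fspan N bs"
  shows "\<exists>c. y = lin_comb N m c B"
proof -
  define z where "z j = (if j = m then y else B j)" for j
  have z: "z j \<in> fspan N bs" if "j \<le> m" for j
    using B y that by (cases "j = m") (auto simp: z_def)
  obtain e where e: "\<exists>j\<le>m. e j \<noteq> 0" "lin_comb N (Suc m) e z = 0\<^sub>v N"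
    by (rule fspan_lin_dependent[OF len z])
  have yc: "y \<in> carrier_vec N"
    using y unfolding fspan_def by (auto intro: mult_mat_vec_carrier[OF mat_of_cols_carrier(1)])
  have zB: "lin_comb N m e z = lin_comb N m e B"
    by (rule lin_comb_cong) (auto simp: z_def)
  have rel: "lin_comb N m e B + e m \<cdot>\<^sub>v y = 0\<^sub>v N"
    using e(2) yc by (simp add: lin_comb_Suc zB z_def)
  have em: "e m \<noteq> 0"
  proof
    assume "e m = 0"
    moreover have "0 \<cdot>\<^sub>v y = 0\<^sub>v N" using yc by (intro eq_vecI) auto
    ultimately have "lin_comb N m e B = 0\<^sub>v N" using rel by simp
    then show False using indep e(1) \<open>e m = 0\<close> by (metis le_neq_implies_less)
  qed
  have "y = lin_comb N m (\<lambda>i. - e i / e m) B"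
  proof (rule eq_vecI)
    fix r assume "r < dim_vec (lin_comb N m (\<lambda>i. - e i / e m) B)"
    then have r: "r < N" by simp
    have "lin_comb N m e B $ r + e m * y $ r = 0"
      using arg_cong[OF rel, of "\<lambda>x. x $ r"] r yc by simp
    then have "y $ r = - (\<Sum>i<m. e i * B i $ r) / e m"
      using r em by (simp add: field_simps eq_neg_iff_add_eq_0)
    also have "\<dots> = lin_comb N m (\<lambda>i. - e i / e m) B $ r"
      using r by (simp add: sum_divide_distrib sum_negf)
    finally show "y $ r = lin_comb N m (\<lambda>i. - e i / e m) B $ r" .
  qed (use yc in simp)
  then show ?thesis by blast
qed

lemma fspan_unit_vecs: "fspan N (cols (1\<^sub>m N)) = (carrier_vec N :: 'a::field vec set)"
proof (intro equalityI subsetI)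
  fix x :: "'a vec"
  have M: "mat_of_cols N (cols (1\<^sub>m N)) = (1\<^sub>m N :: 'a mat)"
    using mat_of_cols_cols[of "1\<^sub>m N :: 'a mat"] by simp
  show "x \<in> carrier_vec N" if "x \<in> fspan N (cols (1\<^sub>m N))"
    using that unfolding fspan_def M by auto
  show "x \<in> fspan N (cols (1\<^sub>m N))" if "x \<in> carrier_vec N"
    using that unfolding fspan_def M by (intro CollectI exI[of _ x]) simp
qed

section \<open>Quadratic forms\<close>

locale quad_form =
  fixes N :: nat and q :: "'a::field vec \<Rightarrow> 'a"
  assumes quad_form: "quadratic_form N q"
begin

lemma q_smult: "x \<in> carrier_vec N \<Longrightarrow> q (c \<cdot>\<^sub>v x) = c\<^sup>2 * q x"
  and bil_add_left: "x \<in> carrier_vec N \<Longrightarrow> y \<in> carrier_vec N \<Longrightarrow> z \<in> carrier_vec N \<Longrightarrow>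
    bil q (x + y) z = bil q x z + bil q y z"
  and bil_smult_left: "x \<in> carrier_vec N \<Longrightarrow> z \<in> carrier_vec N \<Longrightarrow> bil q (c \<cdot>\<^sub>v x) z = c * bil q x z"
  using quad_form unfolding quadratic_form_def by blast+

lemma bil_sym: "x \<in> carrier_vec N \<Longrightarrow> y \<in> carrier_vec N \<Longrightarrow> bil q x y = bil q y x"
  unfolding bil_def by (simp add: comm_add_vec)

lemma bil_add_right:
  "x \<in> carrier_vec N \<Longrightarrow> y \<in> carrier_vec N \<Longrightarrow> z \<in> carrier_vec N \<Longrightarrow>
    bil q z (x + y) = bil q z x + bil q z y"
  by (simp add: bil_sym[of z] bil_add_left)

lemma bil_smult_right: "x \<in> carrier_vec N \<Longrightarrow> z \<in> carrier_vec N \<Longrightarrow> bil q z (c \<cdot>\<^sub>v x) = c * bil q z x"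
  by (simp add: bil_sym[of z] bil_smult_left)

lemma bil_self: "x \<in> carrier_vec N \<Longrightarrow> bil q x x = 2 * q x"
proof -
  assume x: "x \<in> carrier_vec N"
  have "x + x = 2 \<cdot>\<^sub>v x" using x by (intro eq_vecI) auto
  then have "q (x + x) = 4 * q x" using q_smult[OF x, of 2] by simp
  then show ?thesis unfolding bil_def by simp
qed

lemma bil_zero_left:
  assumes "z \<in> carrier_vec N"
  shows "bil q (0\<^sub>v N) z = 0"
proof -
  have "0 \<cdot>\<^sub>v 0\<^sub>v N = (0\<^sub>v N :: 'a vec)" by (intro eq_vecI) auto
  then show ?thesis using bil_smult_left[OF _ assms, of "0\<^sub>v N" 0] by simp
qed

lemma bil_lin_comb_left:
  assumes "\<And>i. i < K \<Longrightarrow> B i \<in> carrier_vec N" and "z \<in> carrier_vec N"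
  shows "bil q (lin_comb N K c B) z = (\<Sum>i<K. c i * bil q (B i) z)"
  using assms(1)
proof (induction K)
  case 0
  then show ?case using assms(2) by (simp add: bil_zero_left)
next
  case (Suc K)
  then show ?case using assms(2) by (simp add: lin_comb_Suc bil_add_left bil_smult_left)
qed

lemma bil_lin_comb_right:
  assumes "\<And>i. i < K \<Longrightarrow> B i \<in> carrier_vec N" and "z \<in> carrier_vec N"
  shows "bil q z (lin_comb N K c B) = (\<Sum>i<K. c i * bil q z (B i))"
  using assms by (simp add: bil_sym[of z] bil_lin_comb_left)

lemma bil_isometry:
  assumes G: "G \<in> carrier_mat N N" and isom: "\<forall>x\<in>carrier_vec N. q (G *\<^sub>v x) = q x"
    and x: "x \<in> carrier_vec N" and y: "y \<in> carrier_vec N"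
  shows "bil q (G *\<^sub>v x) (G *\<^sub>v y) = bil q x y"
  using isom x y unfolding bil_def by (simp add: mult_add_distrib_mat_vec[OF G x y, symmetric])

definition bil_mat :: "'a mat" where
  "bil_mat = mat N N (\<lambda>(r, s). bil q (unit_vec N r) (unit_vec N s))"

lemma bil_mat_carrier [simp]: "bil_mat \<in> carrier_mat N N"
  by (simp add: bil_mat_def)

lemma lin_comb_unit_vecs: "x \<in> carrier_vec N \<Longrightarrow> lin_comb N N (\<lambda>r. x $ r) (unit_vec N) = x"
  by (intro eq_vecI) (auto simp: unit_vec_def if_distrib[of "\<lambda>y. _ * y"] sum.delta cong: if_cong)

lemma bil_eq_scalar_prod:
  assumes x: "x \<in> carrier_vec N" and y: "y \<in> carrier_vec N"
  shows "bil q x y = x \<bullet> (bil_mat *\<^sub>v y)"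
proof -
  have "bil q x y = bil q (lin_comb N N (\<lambda>r. x $ r) (unit_vec N)) (lin_comb N N (\<lambda>s. y $ s) (unit_vec N))"
    using x y by (simp add: lin_comb_unit_vecs)
  also have "\<dots> = (\<Sum>r<N. x $ r * bil q (unit_vec N r) (lin_comb N N (\<lambda>s. y $ s) (unit_vec N)))"
    by (simp add: bil_lin_comb_left)
  also have "\<dots> = (\<Sum>r<N. x $ r * (\<Sum>s<N. y $ s * bil q (unit_vec N r) (unit_vec N s)))"
    by (simp add: bil_lin_comb_right)
  also have "\<dots> = x \<bullet> (bil_mat *\<^sub>v y)"
    using x y by (auto simp: bil_mat_def scalar_prod_def atLeast0LessThan mult.commute intro!: sum.cong)
  finally show ?thesis .
qed

lemma isometry_congruence:
  assumes G: "G \<in> carrier_mat N N" and isom: "\<forall>x\<in>carrier_vec N. q (G *\<^sub>v x) = q x"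
  shows "transpose_mat G * (bil_mat * G) = bil_mat"
proof (rule eq_matI)
  fix i j assume "i < dim_row bil_mat" "j < dim_col bil_mat"
  then have i: "i < N" and j: "j < N" by (auto simp: bil_mat_def)
  have col: "col G k = G *\<^sub>v unit_vec N k" if "k < N" for k
    using G that by (intro eq_vecI) (auto simp: scalar_prod_def unit_vec_def if_distrib[of "\<lambda>y. _ * y"] sum.delta cong: if_cong)
  have "(transpose_mat G * (bil_mat * G)) $$ (i, j) = col G i \<bullet> (bil_mat *\<^sub>v col G j)"
    using G i j by (simp add: col_mult2[OF bil_mat_carrier G j])
  also have "\<dots> = bil q (G *\<^sub>v unit_vec N i) (G *\<^sub>v unit_vec N j)"
    using G i j by (simp add: col bil_eq_scalar_prod)
  also have "\<dots> = bil_mat $$ (i, j)"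
    using i j by (simp add: bil_isometry[OF G isom] bil_mat_def)
  finally show "(transpose_mat G * (bil_mat * G)) $$ (i, j) = bil_mat $$ (i, j)" .
qed (use G in \<open>auto simp: bil_mat_def\<close>)

end

locale quad_space = quad_form +
  assumes nondeg: "nondegenerate N q"
begin

lemma det_bil_mat_nonzero: "det bil_mat \<noteq> 0"
proof
  assume "det bil_mat = 0"
  then obtain c where c: "c \<in> carrier_vec N" "c \<noteq> 0\<^sub>v N" "bil_mat *\<^sub>v c = 0\<^sub>v N"
    using det_0_iff_vec_prod_zero[OF bil_mat_carrier] by blast
  have "bil q c x = 0" if x: "x \<in> carrier_vec N" for x
  proof -
    have "bil q x c = x \<bullet> (bil_mat *\<^sub>v c)" by (rule bil_eq_scalar_prod[OF x c(1)])
    also have "\<dots> = 0" using c(3) x by simp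
    finally show ?thesis using bil_sym[OF x c(1)] by simp
  qed
  then show False using nondeg c(1,2) unfolding nondegenerate_def by blast
qed

lemma isometry_det_square:
  assumes G: "G \<in> carrier_mat N N" and isom: "\<forall>x\<in>carrier_vec N. q (G *\<^sub>v x) = q x"
  shows "(det G)\<^sup>2 = 1"
proof -
  have SG: "bil_mat * G \<in> carrier_mat N N" using mult_carrier_mat[OF bil_mat_carrier G] .
  have "det (transpose_mat G * (bil_mat * G)) = det (transpose_mat G) * det (bil_mat * G)"
    using G by (intro det_mult[OF _ SG]) simp
  also have "\<dots> = det G * (det bil_mat * det G)"
    by (simp add: det_transpose[OF G] det_mult[OF bil_mat_carrier G])
  finally have "det G * (det bil_mat * det G) = det bil_mat"
    by (simp add: isometry_congruence[OF G isom])
  then have "((det G)\<^sup>2 - 1) * det bil_mat = 0"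
    by (simp add: algebra_simps power2_eq_square)
  then show ?thesis using det_bil_mat_nonzero by simp
qed

end

section \<open>Standard bases of lattices of type \<open>a\<close>\<close>

lemma sum_odd_pairs:
  fixes f :: "nat \<Rightarrow> 'b::comm_monoid_add"
  shows "(\<Sum>i<2*m+1. f i) = (\<Sum>i<m. f i + f (2*m - i)) + f m"
proof -
  have U: "{..<2*m+1} = {..<m} \<union> ({m} \<union> (\<lambda>i. 2*m - i) ` {..<m})"
  proof (intro equalityI subsetI)
    fix x assume "x \<in> {..<2*m+1}"
    then have "x < m \<or> x = m \<or> (2*m - (2*m - x) = x \<and> 2*m - x < m)" by auto
    then show "x \<in> {..<m} \<union> ({m} \<union> (\<lambda>i. 2*m - i) ` {..<m})" by (metis UnCI image_eqI insertI1 lessThan_iff)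
  qed auto
  have inj: "inj_on (\<lambda>i. 2*m - i) {..<m}" by (rule inj_onI) auto
  have "(\<Sum>i<2*m+1. f i) = sum f {..<m} + (f m + sum f ((\<lambda>i. 2*m - i) ` {..<m}))"
    unfolding U by (subst sum.union_disjoint) (auto simp: sum.insert_if)
  also have "sum f ((\<lambda>i. 2*m - i) ` {..<m}) = (\<Sum>i<m. f (2*m - i))"
    by (simp add: sum.reindex[OF inj])
  finally show ?thesis by (simp add: sum.distrib algebra_simps)
qed

locale type_a_space = discrete_val v + quad_space N q
  for v :: "'a::field_char_0 \<Rightarrow> int" and N and q :: "'a vec \<Rightarrow> 'a" +
  fixes n :: nat and a :: 'a
  assumes dim_eq: "N = 2*n+1"
    and a_nonzero: "a \<noteq> 0" and a_in_val_ring: "a \<in> val_ring v"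
begin

lemma less_dim_iff: "i < N \<longleftrightarrow> i \<le> 2*n"
  using dim_eq by auto

definition pair_weight :: "nat \<Rightarrow> 'a" where
  "pair_weight i = (if i = n then 2 * a else 1)"

text \<open>The vectors \<open>B 0, \<dots>, B (2*n)\<close> stand for the paper's basis \<open>e\<^sub>1, \<dots>, e\<^sub>n, v\<^sub>0, f\<^sub>n, \<dots>, f\<^sub>1\<close>:
  the partner of \<open>B i\<close> is \<open>B (2*n - i)\<close>.\<close>

definition std_basis :: "(nat \<Rightarrow> 'a vec) \<Rightarrow> bool" where
  "std_basis B \<longleftrightarrow> (\<forall>i<N. B i \<in> carrier_vec N) \<and>
     (\<forall>i<N. \<forall>j<N. bil q (B i) (B j) = (if i + j = 2*n then pair_weight i else 0))"

definition lattice_span :: "(nat \<Rightarrow> 'a vec) \<Rightarrow> 'a vec set" where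
  "lattice_span B = {lin_comb N N c B | c. \<forall>i<N. c i \<in> val_ring v}"

definition span_first :: "nat \<Rightarrow> (nat \<Rightarrow> 'a vec) \<Rightarrow> 'a vec set" where
  "span_first K B = range (\<lambda>c. lin_comb N K c B)"

lemma pair_weight_nonzero: "pair_weight i \<noteq> 0"
  by (simp add: pair_weight_def a_nonzero)

lemma pair_weight_in_val_ring: "pair_weight i \<in> val_ring v"
  using val_ring_mult[OF val_ring_add[OF val_ring_1 val_ring_1] a_in_val_ring]
  by (simp add: pair_weight_def)

lemma std_basis_carrier: "std_basis B \<Longrightarrow> i < N \<Longrightarrow> B i \<in> carrier_vec N"
  and std_basis_bil: "std_basis B \<Longrightarrow> i < N \<Longrightarrow> j < N \<Longrightarrow>
    bil q (B i) (B j) = (if i + j = 2*n then pair_weight i else 0)"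
  unfolding std_basis_def by blast+

lemma bil_lin_comb_std_basis:
  assumes B: "std_basis B" and j: "j < N"
  shows "bil q (lin_comb N N c B) (B j) = c (2*n - j) * pair_weight j"
proof -
  have "bil q (lin_comb N N c B) (B j) = (\<Sum>i<N. c i * bil q (B i) (B j))"
    using B j by (intro bil_lin_comb_left) (auto simp: std_basis_carrier)
  also have "\<dots> = (\<Sum>i<N. if i = 2*n - j then c i * pair_weight j else 0)"
    using B j by (intro sum.cong) (auto simp: std_basis_bil less_dim_iff pair_weight_def)
  also have "\<dots> = c (2*n - j) * pair_weight j"
    using j by (simp add: less_dim_iff)
  finally show ?thesis .
qed

lemma std_basis_independent:
  assumes B: "std_basis B" and c: "lin_comb N N c B = 0\<^sub>v N" and i: "i < N"
  shows "c i = 0"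
proof -
  have "c (2*n - (2*n - i)) * pair_weight (2*n - i) = 0"
    using bil_lin_comb_std_basis[OF B, of "2*n - i" c] i c
    by (simp add: less_dim_iff bil_zero_left std_basis_carrier[OF B])
  then show ?thesis using i pair_weight_nonzero by (simp add: less_dim_iff)
qed

lemma std_basis_spans:
  assumes B: "std_basis B" and x: "x \<in> carrier_vec N"
  shows "\<exists>c. x = lin_comb N N c B"
  using B x std_basis_independent[OF B]
  by (intro fspan_in_lin_comb_span[where bs = "cols (1\<^sub>m N)"]) (auto simp: fspan_unit_vecs std_basis_carrier)

lemma q_lin_comb_std_basis:
  assumes B: "std_basis B"
  shows "q (lin_comb N N c B) = (\<Sum>i<n. c i * c (2*n - i)) + a * (c n)\<^sup>2"
proof -
  have "2 * q (lin_comb N N c B) = bil q (lin_comb N N c B) (lin_comb N N c B)"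
    by (simp add: bil_self)
  also have "\<dots> = (\<Sum>i<N. c i * bil q (B i) (lin_comb N N c B))"
    using B by (intro bil_lin_comb_left) (auto simp: std_basis_carrier)
  also have "\<dots> = (\<Sum>i<N. c i * c (2*n - i) * pair_weight i)"
    using B by (intro sum.cong refl)
      (simp add: bil_sym[of "B _"] std_basis_carrier bil_lin_comb_std_basis)
  also have "\<dots> = (\<Sum>i<n. c i * c (2*n - i) * pair_weight i
        + c (2*n - i) * c (2*n - (2*n - i)) * pair_weight (2*n - i)) + c n * c (2*n - n) * pair_weight n"
    unfolding dim_eq by (rule sum_odd_pairs)
  also have "(\<Sum>i<n. c i * c (2*n - i) * pair_weight i
        + c (2*n - i) * c (2*n - (2*n - i)) * pair_weight (2*n - i)) = (\<Sum>i<n. 2 * (c i * c (2*n - i)))"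
    by (rule sum.cong) (auto simp: pair_weight_def)
  also have "c n * c (2*n - n) * pair_weight n = 2 * (a * (c n)\<^sup>2)"
    by (simp add: pair_weight_def power2_eq_square)
  finally have "2 * q (lin_comb N N c B) = 2 * ((\<Sum>i<n. c i * c (2*n - i)) + a * (c n)\<^sup>2)"
    by (simp add: distrib_left sum_distrib_left)
  then show ?thesis by (subst (asm) mult_cancel_left) simp
qed

lemma lattice_span_carrier: "lattice_span B \<subseteq> carrier_vec N"
  unfolding lattice_span_def by auto

lemma zero_in_lattice_span: "0\<^sub>v N \<in> lattice_span B"
  unfolding lattice_span_def by (auto intro!: exI[of _ "\<lambda>_. 0"])

lemma lattice_span_add: "x \<in> lattice_span B \<Longrightarrow> y \<in> lattice_span B \<Longrightarrow> x + y \<in> lattice_span B"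
  unfolding lattice_span_def by (auto simp: lin_comb_add intro!: val_ring_add)

lemma lattice_span_smult: "s \<in> val_ring v \<Longrightarrow> x \<in> lattice_span B \<Longrightarrow> s \<cdot>\<^sub>v x \<in> lattice_span B"
  unfolding lattice_span_def by (auto simp: lin_comb_smult intro!: val_ring_mult)

lemma basis_in_lattice_span:
  assumes "j < N" "B j \<in> carrier_vec N"
  shows "B j \<in> lattice_span B"
  unfolding lattice_span_def
proof (intro CollectI exI conjI)
  show "B j = lin_comb N N (\<lambda>i. if i = j then 1 else 0) B"
    using lin_comb_single[of j N B N 1] assms by simp
qed simp

lemma lin_comb_in_lattice_span:
  assumes "\<And>i. i < K \<Longrightarrow> C i \<in> lattice_span B" and "\<And>i. i < K \<Longrightarrow> c i \<in> val_ring v"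
  shows "lin_comb N K c C \<in> lattice_span B"
  using assms
proof (induction K)
  case 0
  then show ?case by (simp add: zero_in_lattice_span)
next
  case (Suc K)
  have "C K \<in> carrier_vec N"
    using Suc.prems(1)[of K] by (auto simp: lattice_span_def)
  then show ?case
    using Suc by (simp add: lin_comb_Suc lattice_span_add lattice_span_smult)
qed

lemma lattice_span_subset:
  "(\<And>i. i < N \<Longrightarrow> C i \<in> lattice_span B) \<Longrightarrow> lattice_span C \<subseteq> lattice_span B"
  using lin_comb_in_lattice_span unfolding lattice_span_def[of C] by auto

lemma bil_lattice_span_in_val_ring:
  assumes "std_basis B" "u \<in> lattice_span B" "j < N"
  shows "bil q u (B j) \<in> val_ring v"
  using assms
  by (auto simp: lattice_span_def less_dim_iff bil_lin_comb_std_basis intro!: val_ring_mult pair_weight_in_val_ring)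

definition witt_basis :: "(nat \<Rightarrow> 'a vec) \<Rightarrow> 'a vec \<Rightarrow> (nat \<Rightarrow> 'a vec) \<Rightarrow> nat \<Rightarrow> 'a vec" where
  "witt_basis e v0 f i = (if i < n then e i else if i = n then v0 else f (2*n - i))"

lemma nth_witt_list:
  assumes "i < N"
  shows "(map e [0..<n] @ [v0] @ rev (map f [0..<n])) ! i = witt_basis e v0 f i"
proof -
  consider "i < n" | "i = n" | "n < i" "i - n - 1 < n" using assms by (fastforce simp: less_dim_iff)
  then show ?thesis
    by cases (auto simp: witt_basis_def nth_append rev_nth intro!: arg_cong[where f = f])
qed

lemma rspan_eq_lattice_span:
  assumes len: "length bs = N" and nth: "\<And>i. i < N \<Longrightarrow> bs ! i = B i"
  shows "rspan (val_ring v) N bs = lattice_span B"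
proof -
  have mult: "mat_of_cols N bs *\<^sub>v c = lin_comb N N (\<lambda>i. c $ i) B" if "c \<in> carrier_vec N" for c
  proof -
    have "mat_of_cols N bs *\<^sub>v c = lin_comb N N (\<lambda>i. c $ i) (\<lambda>i. bs ! i)"
      using mat_of_cols_mult_vec[of c bs N] that len by simp
    also have "\<dots> = lin_comb N N (\<lambda>i. c $ i) B"
      by (rule lin_comb_cong) (simp_all add: nth)
    finally show ?thesis .
  qed
  show ?thesis
    unfolding rspan_def lattice_span_def len
  proof (intro equalityI subsetI)
    fix y assume "y \<in> {mat_of_cols N bs *\<^sub>v c |c. c \<in> carrier_vec N \<and> (\<forall>i<N. c $ i \<in> val_ring v)}"
    then show "y \<in> {lin_comb N N c B |c. \<forall>i<N. c i \<in> val_ring v}"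
      using mult by auto
  next
    fix y assume "y \<in> {lin_comb N N c B |c. \<forall>i<N. c i \<in> val_ring v}"
    then obtain c where c: "y = lin_comb N N c B" "\<forall>i<N. c i \<in> val_ring v" by blast
    have "y = mat_of_cols N bs *\<^sub>v vec N c"
      unfolding c(1) mult[OF vec_carrier] by (rule lin_comb_cong) simp_all
    then show "y \<in> {mat_of_cols N bs *\<^sub>v c |c. c \<in> carrier_vec N \<and> (\<forall>i<N. c $ i \<in> val_ring v)}"
      using c(2) by (intro CollectI exI[of _ "vec N c"]) simp
  qed
qed

context
  fixes e f :: "nat \<Rightarrow> 'a vec" and v0 :: "'a vec"
  assumes carrier: "\<And>i. i < n \<Longrightarrow> e i \<in> carrier_vec N" "\<And>i. i < n \<Longrightarrow> f i \<in> carrier_vec N"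
      "v0 \<in> carrier_vec N"
    and ee: "\<And>i j. i < n \<Longrightarrow> j < n \<Longrightarrow> bil q (e i) (e j) = 0"
    and ff: "\<And>i j. i < n \<Longrightarrow> j < n \<Longrightarrow> bil q (f i) (f j) = 0"
    and ef: "\<And>i j. i < n \<Longrightarrow> j < n \<Longrightarrow> bil q (e i) (f j) = (if i = j then 1 else 0)"
    and ev: "\<And>i. i < n \<Longrightarrow> bil q (e i) v0 = 0" and fv: "\<And>i. i < n \<Longrightarrow> bil q (f i) v0 = 0"
    and vv: "bil q v0 v0 = 2 * a"
begin

private lemma bil_e_witt_basis:
  assumes i: "i < n" and j: "j < N"
  shows "bil q (e i) (witt_basis e v0 f j) = (if j = 2*n - i then 1 else 0)"
proof -
  consider "j < n" | "j = n" | "n < j" by linarith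
  then show ?thesis
  proof cases
    case 3
    then have "2*n - j < n" "i = 2*n - j \<longleftrightarrow> j = 2*n - i" using i j by (auto simp: less_dim_iff)
    then show ?thesis using i 3 ef[of i "2*n - j"] by (simp add: witt_basis_def)
  qed (use i ee ev in \<open>simp_all add: witt_basis_def\<close>)
qed

private lemma bil_v0_witt_basis:
  assumes j: "j < N"
  shows "bil q v0 (witt_basis e v0 f j) = (if j = n then 2 * a else 0)"
proof -
  consider "j < n" | "j = n" | "n < j" by linarith
  then show ?thesis
  proof cases
    case 3
    then have "2*n - j < n" using j by (auto simp: less_dim_iff)
    then show ?thesis using 3 carrier fv by (simp add: witt_basis_def bil_sym[of v0 "f _"])
  qed (use carrier ev vv in \<open>simp_all add: witt_basis_def bil_sym[of v0 "e _"]\<close>)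
qed

private lemma bil_f_witt_basis:
  assumes i: "i < n" and j: "j < N"
  shows "bil q (f i) (witt_basis e v0 f j) = (if j = i then 1 else 0)"
proof -
  consider "j < n" | "j = n" | "n < j" by linarith
  then show ?thesis
  proof cases
    case 1
    then show ?thesis using i ef[of j i] carrier by (simp add: witt_basis_def bil_sym[of "f i"])
  next
    case 3
    then have "2*n - j < n" using j by (auto simp: less_dim_iff)
    then show ?thesis using i 3 ff[of i "2*n - j"] by (simp add: witt_basis_def)
  qed (use i fv in \<open>simp add: witt_basis_def\<close>)
qed

lemma std_basis_witt_basis: "std_basis (witt_basis e v0 f)"
  unfolding std_basis_def
proof (intro conjI allI impI)
  fix i assume "i < N"
  then show "witt_basis e v0 f i \<in> carrier_vec N" using carrier by (auto simp: witt_basis_def less_dim_iff)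
next
  fix i j assume i: "i < N" and j: "j < N"
  consider "i < n" | "i = n" | "n < i" by linarith
  then show "bil q (witt_basis e v0 f i) (witt_basis e v0 f j) = (if i + j = 2*n then pair_weight i else 0)"
    by cases (use i j bil_e_witt_basis bil_v0_witt_basis bil_f_witt_basis[of "2*n - i" j] in
      \<open>auto simp: witt_basis_def pair_weight_def less_dim_iff\<close>)
qed

end

lemma lattice_of_type_std_basis:
  assumes "lattice_of_type v N q n a L"
  obtains B where "std_basis B" "L = lattice_span B"
proof -
  obtain e f v0 where "\<forall>i<n. e i \<in> carrier_vec N \<and> f i \<in> carrier_vec N" "v0 \<in> carrier_vec N"
    and "\<forall>i<n. \<forall>j<n. bil q (e i) (e j) = 0 \<and> bil q (f i) (f j) = 0 \<and>
               bil q (e i) (f j) = (if i = j then 1 else 0)"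
    and "\<forall>i<n. bil q (e i) v0 = 0 \<and> bil q (f i) v0 = 0" "bil q v0 v0 = 2 * a"
    and L: "L = rspan (val_ring v) N (map e [0..<n] @ [v0] @ rev (map f [0..<n]))"
    using assms unfolding lattice_of_type_def Let_def by blast
  then have "std_basis (witt_basis e v0 f)"
    by (intro std_basis_witt_basis) auto
  moreover have "L = lattice_span (witt_basis e v0 f)"
  proof -
    have "length (map e [0..<n] @ [v0] @ rev (map f [0..<n])) = N" using dim_eq by simp
    then show ?thesis unfolding L by (rule rspan_eq_lattice_span[OF _ nth_witt_list])
  qed
  ultimately show ?thesis using that by blast
qed

text \<open>This is where \<open>val a \<le> 1\<close> enters: an isotropic primitive vector cannot have all its
  coefficients outside the middle position in the maximal ideal, since then \<open>a\<close> would lie in \<open>\<pp>\<^sup>2\<close>.\<close>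

lemma isotropic_unit_coeff:
  assumes B: "std_basis B" and val_a: "v a \<le> 1"
    and d: "\<forall>i<N. d i \<in> val_ring v" and m: "m < N" "d m = 1"
    and iso: "q (lin_comb N N d B) = 0"
  shows "\<exists>p<N. p \<noteq> n \<and> d p \<noteq> 0 \<and> v (d p) = 0"
proof (rule ccontr)
  assume no_unit: "\<not> ?thesis"
  then have m_n: "m = n" using m by force
  have ideal: "d p \<in> val_ge v 1" if "p < N" "p \<noteq> n" for p
  proof -
    have "d p = 0 \<or> 0 \<le> v (d p)" "d p = 0 \<or> v (d p) \<noteq> 0"
      using d no_unit that by (auto simp: val_ring_def)
    then show ?thesis by (auto simp: val_ge_def)
  qed
  have "(\<Sum>i<n. d i * d (2*n - i)) \<in> val_ge v (1 + 1)"
    using ideal by (intro val_ge_sum val_ge_mult) (auto simp: less_dim_iff)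
  moreover have "a = - (\<Sum>i<n. d i * d (2*n - i))"
    using iso m m_n by (simp add: q_lin_comb_std_basis[OF B] eq_neg_iff_add_eq_0 add.commute)
  ultimately have "a \<in> val_ge v 2"
    by (simp add: val_ge_uminus)
  then show False using a_nonzero val_a by (simp add: val_ge_def)
qed

lemma span_first_cong: "(\<And>i. i < K \<Longrightarrow> B' i = B i) \<Longrightarrow> span_first K B' = span_first K B"
  unfolding span_first_def by (metis (no_types, lifting) lin_comb_cong)

lemma subspace_eq_span_first:
  assumes S: "subspace_dim N S K" and K: "K \<le> N" and E: "std_basis E" and ES: "\<And>i. i < K \<Longrightarrow> E i \<in> S"
  shows "S = span_first K E"
proof
  show "span_first K E \<subseteq> S"
    using S ES unfolding span_first_def subspace_dim_def by (auto intro: lin_comb_in_subspace)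
  obtain bs where bs: "length bs = K" "S = fspan N bs"
    using S unfolding subspace_dim_def by blast
  have indep: "\<forall>j<K. e j = 0" if e: "lin_comb N K e E = 0\<^sub>v N" for e
  proof (intro allI impI)
    fix j assume j: "j < K"
    have "lin_comb N N (\<lambda>i. if i < K then e i else 0) E = 0\<^sub>v N"
      using e by (simp add: lin_comb_extend[OF K, of N e E, symmetric])
    then have "(if j < K then e j else 0) = 0"
      using j K by (intro std_basis_independent[OF E]) auto
    then show "e j = 0" using j by simp
  qed
  show "S \<subseteq> span_first K E"
    using fspan_in_lin_comb_span[OF bs(1), of E] ES indep bs(2) unfolding span_first_def by blast
qed

end

subsection \<open>Permuting a standard basis\<close>

definition pairing_involution :: "nat \<Rightarrow> (nat \<Rightarrow> nat) \<Rightarrow> bool" where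
  "pairing_involution n \<tau> \<longleftrightarrow> (\<forall>i\<le>2*n. \<tau> i \<le> 2*n \<and> \<tau> (\<tau> i) = i \<and> \<tau> (2*n - i) = 2*n - \<tau> i)"

lemma reflect_transpose:
  fixes a b i m :: nat
  assumes "a \<le> m" "b \<le> m" "i \<le> m"
  shows "m - Transposition.transpose a b i = Transposition.transpose (m - a) (m - b) (m - i)"
proof -
  have "m - i = m - a \<longleftrightarrow> i = a" "m - i = m - b \<longleftrightarrow> i = b" using assms by auto
  then show ?thesis by (auto simp: Transposition.transpose_def)
qed

lemma transpose_le:
  fixes a b i m :: nat
  shows "a \<le> m \<Longrightarrow> b \<le> m \<Longrightarrow> i \<le> m \<Longrightarrow> Transposition.transpose a b i \<le> m"
  by (simp add: Transposition.transpose_def)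

lemma transpose_disjoint_commute:
  "a \<noteq> c \<Longrightarrow> a \<noteq> d \<Longrightarrow> b \<noteq> c \<Longrightarrow> b \<noteq> d \<Longrightarrow>
    Transposition.transpose a b (Transposition.transpose c d i) =
    Transposition.transpose c d (Transposition.transpose a b i)"
  by (auto simp: Transposition.transpose_def)

lemma exists_pairing_involution:
  assumes "k < n" "k \<le> p" "p \<le> 2*n - k" "p \<noteq> n"
  obtains \<tau> where "pairing_involution n \<tau>" "\<tau> k = p" "\<forall>i<k. \<tau> i = i"
proof (cases "p = 2*n - k")
  case True
  let ?\<tau> = "Transposition.transpose k p"
  have "pairing_involution n ?\<tau>"
    unfolding pairing_involution_def
  proof (intro allI impI conjI)
    fix i assume i: "i \<le> 2*n"
    show "?\<tau> i \<le> 2*n" using i assms by (intro transpose_le) auto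
    show "?\<tau> (?\<tau> i) = i" by simp
    have "2*n - ?\<tau> i = Transposition.transpose p k (2*n - i)"
      using reflect_transpose[of k "2*n" p i] i assms True by auto
    then show "?\<tau> (2*n - i) = 2*n - ?\<tau> i" by (simp add: transpose_commute)
  qed
  moreover have "\<forall>i<k. ?\<tau> i = i" using assms by auto
  ultimately show ?thesis using that by simp
next
  case False
  let ?\<sigma> = "Transposition.transpose k p" and ?\<rho> = "Transposition.transpose (2*n - k) (2*n - p)"
  have disj: "k \<noteq> 2*n - k" "k \<noteq> 2*n - p" "p \<noteq> 2*n - k" "p \<noteq> 2*n - p"
    using assms False by auto
  have comm: "?\<sigma> (?\<rho> i) = ?\<rho> (?\<sigma> i)" for i
    using disj by (intro transpose_disjoint_commute)
  have "pairing_involution n (?\<sigma> \<circ> ?\<rho>)"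
    unfolding pairing_involution_def
  proof (intro allI impI conjI)
    fix i assume i: "i \<le> 2*n"
    show "(?\<sigma> \<circ> ?\<rho>) i \<le> 2*n" using i assms by (auto intro!: transpose_le)
    show "(?\<sigma> \<circ> ?\<rho>) ((?\<sigma> \<circ> ?\<rho>) i) = i" by (simp add: comm)
    have "?\<rho> i \<le> 2*n" using i assms by (intro transpose_le) auto
    then have "2*n - ?\<sigma> (?\<rho> i) = ?\<rho> (2*n - ?\<rho> i)"
      using reflect_transpose[of k "2*n" p "?\<rho> i"] assms by auto
    also have "2*n - ?\<rho> i = ?\<sigma> (2*n - i)"
      using reflect_transpose[of "2*n - k" "2*n" "2*n - p" i] i assms by auto
    finally show "(?\<sigma> \<circ> ?\<rho>) (2*n - i) = 2*n - (?\<sigma> \<circ> ?\<rho>) i" by (simp add: comm)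
  qed
  moreover have "(?\<sigma> \<circ> ?\<rho>) k = p" "\<forall>i<k. (?\<sigma> \<circ> ?\<rho>) i = i"
    using assms disj by auto
  ultimately show ?thesis using that by blast
qed

context type_a_space
begin

lemma pairing_involution_less:
  assumes "pairing_involution n \<tau>" "i < N"
  shows "\<tau> i < N" and "\<tau> (\<tau> i) = i" and "\<tau> (2*n - i) = 2*n - \<tau> i"
  using assms unfolding pairing_involution_def less_dim_iff by blast+

lemma pairing_involution_bij:
  assumes "pairing_involution n \<tau>"
  shows "bij_betw \<tau> {..<N} {..<N}"
  by (rule bij_betw_byWitness[where f' = \<tau>]) (auto simp: pairing_involution_less[OF assms])

lemma pairing_involution_fix_middle:
  assumes "pairing_involution n \<tau>"
  shows "\<tau> n = n"
  using pairing_involution_less[OF assms, of n] dim_eq by simp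

lemma std_basis_permute:
  assumes \<tau>: "pairing_involution n \<tau>" and B: "std_basis B"
  shows "std_basis (B \<circ> \<tau>)"
  unfolding std_basis_def
proof (intro conjI allI impI)
  fix i assume "i < N"
  then show "(B \<circ> \<tau>) i \<in> carrier_vec N"
    using B by (simp add: std_basis_carrier pairing_involution_less[OF \<tau>])
next
  fix i j assume i: "i < N" and j: "j < N"
  note inv = pairing_involution_less[OF \<tau>]
  have pair: "\<tau> i + \<tau> j = 2*n \<longleftrightarrow> i + j = 2*n"
  proof
    assume "\<tau> i + \<tau> j = 2*n"
    then have "j = \<tau> (2*n - \<tau> i)" using inv(2)[OF j] by (metis add_diff_cancel_left')
    also have "\<dots> = 2*n - i" using inv[OF inv(1)[OF i]] inv(2)[OF i] by simp
    finally show "i + j = 2*n" using i by (simp add: less_dim_iff)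
  next
    assume "i + j = 2*n"
    then have "\<tau> j = 2*n - \<tau> i" using inv(3)[OF i] by (metis add_diff_cancel_left')
    then show "\<tau> i + \<tau> j = 2*n" using inv(1)[OF i] by (simp add: less_dim_iff)
  qed
  have "\<tau> i = n \<longleftrightarrow> i = n"
    using inv(2)[OF i] pairing_involution_fix_middle[OF \<tau>] by metis
  then have "pair_weight (\<tau> i) = pair_weight i"
    by (simp add: pair_weight_def)
  then show "bil q ((B \<circ> \<tau>) i) ((B \<circ> \<tau>) j) = (if i + j = 2*n then pair_weight i else 0)"
    using B inv(1)[OF i] inv(1)[OF j] pair by (simp add: std_basis_bil)
qed

lemma lattice_span_permute:
  assumes \<tau>: "pairing_involution n \<tau>"
  shows "lattice_span (B \<circ> \<tau>) = lattice_span B"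
proof -
  have bij: "bij_betw \<tau> {..<N} {..<N}" by (rule pairing_involution_bij[OF \<tau>])
  have inv: "\<tau> (\<tau> i) = i" "\<tau> i < N" if "i < N" for i
    using pairing_involution_less[OF \<tau> that] by simp_all
  have reindex: "lin_comb N N c (B \<circ> \<tau>) = lin_comb N N (c \<circ> \<tau>) B" for c
  proof (rule eq_vecI)
    fix r assume r: "r < dim_vec (lin_comb N N (c \<circ> \<tau>) B)"
    have "(\<Sum>i<N. c i * B (\<tau> i) $ r) = (\<Sum>i<N. c (\<tau> (\<tau> i)) * B (\<tau> i) $ r)"
      by (rule sum.cong) (simp_all add: inv)
    also have "\<dots> = (\<Sum>i<N. c (\<tau> i) * B i $ r)"
      by (rule sum.reindex_bij_betw[OF bij])
    finally show "lin_comb N N c (B \<circ> \<tau>) $ r = lin_comb N N (c \<circ> \<tau>) B $ r"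
      using r by simp
  qed simp
  show ?thesis
  proof (intro equalityI subsetI)
    fix y assume "y \<in> lattice_span (B \<circ> \<tau>)"
    then obtain c where "y = lin_comb N N (c \<circ> \<tau>) B" "\<forall>i<N. c i \<in> val_ring v"
      unfolding lattice_span_def reindex by blast
    then show "y \<in> lattice_span B" using inv unfolding lattice_span_def by auto
  next
    fix y assume "y \<in> lattice_span B"
    then obtain c where c: "y = lin_comb N N c B" "\<forall>i<N. c i \<in> val_ring v"
      unfolding lattice_span_def by blast
    have "y = lin_comb N N (c \<circ> \<tau> \<circ> \<tau>) B"
      unfolding c(1) using inv by (intro lin_comb_cong) auto
    then show "y \<in> lattice_span (B \<circ> \<tau>)"
      using c(2) inv unfolding lattice_span_def reindex[symmetric] by auto
  qed
qed

end

subsection \<open>Eichler transformations\<close>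

context type_a_space
begin

text \<open>For isotropic \<open>u\<close> with \<open>\<langle>u, B (2*n - k)\<rangle> \<noteq> 0\<close>: the correction terms make all vectors
  other than \<open>u\<close> and its new partner orthogonal to \<open>u\<close>, so the Gram matrix stays standard.\<close>

definition eichler_basis :: "(nat \<Rightarrow> 'a vec) \<Rightarrow> nat \<Rightarrow> 'a vec \<Rightarrow> nat \<Rightarrow> 'a vec" where
  "eichler_basis B k u i =
     (let F = B (2*n - k); x = bil q u F in
      if i = k then u
      else if i = 2*n - k then (1 / x) \<cdot>\<^sub>v F
      else B i + (- (bil q u (B i) / x)) \<cdot>\<^sub>v F)"

lemma eichler_basis_at: "eichler_basis B k u k = u"
  by (simp add: eichler_basis_def)

lemma eichler_basis_below:
  assumes "std_basis B" "k < n" "i < k" "bil q u (B i) = 0"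
  shows "eichler_basis B k u i = B i"
proof -
  have "B i \<in> carrier_vec N" "B (2*n - k) \<in> carrier_vec N"
    using assms by (auto simp: std_basis_carrier less_dim_iff)
  moreover have "0 \<cdot>\<^sub>v B (2*n - k) = 0\<^sub>v N" if "B (2*n - k) \<in> carrier_vec N"
    using that by (intro eq_vecI) auto
  ultimately show ?thesis
    using assms by (auto simp: eichler_basis_def Let_def)
qed

context
  fixes B :: "nat \<Rightarrow> 'a vec" and k :: nat and u :: "'a vec"
  assumes B: "std_basis B" and k: "k < n" and u_iso: "q u = 0"
    and x_nonzero: "bil q u (B (2*n - k)) \<noteq> 0"
begin

private abbreviation "K \<equiv> 2*n - k"
private abbreviation "F \<equiv> B K"
private abbreviation "x \<equiv> bil q u F"
private abbreviation "E \<equiv> eichler_basis B k u"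

private lemma indices: "k < N" "K < N" "k \<noteq> K" "k \<noteq> n" "K \<noteq> n" "\<And>i. i < N \<Longrightarrow> i + K = 2*n \<longleftrightarrow> i = k"
  "\<And>i. i < N \<Longrightarrow> i + k = 2*n \<longleftrightarrow> i = K"
  using k by (auto simp: less_dim_iff)

private lemma F_carrier: "F \<in> carrier_vec N"
  using B indices by (simp add: std_basis_carrier)

private lemma eichler_cases:
  "E i = (if i = k then u else if i = K then (1 / x) \<cdot>\<^sub>v F else B i + (- (bil q u (B i) / x)) \<cdot>\<^sub>v F)"
  by (simp add: eichler_basis_def Let_def)

context
  assumes u: "u \<in> carrier_vec N"
begin

lemma eichler_basis_carrier: "i < N \<Longrightarrow> eichler_basis B k u i \<in> carrier_vec N"
  using B u F_carrier by (simp add: eichler_cases std_basis_carrier)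

private lemma bil_F_basis: "j < N \<Longrightarrow> bil q F (B j) = (if j = k then 1 else 0)"
  using B indices by (simp add: std_basis_bil pair_weight_def add.commute)

private lemma bil_basis_F: "j < N \<Longrightarrow> bil q (B j) F = (if j = k then 1 else 0)"
  using B F_carrier by (simp add: bil_sym[of "B j"] std_basis_carrier bil_F_basis)

private lemma bil_eichler_u: "i < N \<Longrightarrow> bil q (E i) u = (if i = K then 1 else 0)"
  using B u F_carrier u_iso x_nonzero indices
  by (auto simp: eichler_cases bil_self bil_add_left bil_smult_left bil_sym[of F] bil_sym[of "B i"] std_basis_carrier)

private lemma bil_eichler_F: "i < N \<Longrightarrow> bil q (E i) F = (if i = k then x else 0)"
  using B u F_carrier indices bil_F_basis[of K]
  by (auto simp: eichler_cases bil_add_left bil_smult_left bil_basis_F std_basis_carrier)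

private lemma bil_eichler_other:
  assumes "i < N" "j < N" "i \<noteq> k" "i \<noteq> K" "j \<noteq> k" "j \<noteq> K"
  shows "bil q (E i) (E j) = bil q (B i) (B j)"
  using assms B F_carrier bil_F_basis[of K] indices
  by (simp add: eichler_cases bil_add_left bil_add_right bil_smult_left bil_smult_right
      bil_F_basis bil_basis_F std_basis_carrier)

lemma std_basis_eichler_basis: "std_basis (eichler_basis B k u)"
  unfolding std_basis_def
proof (intro conjI allI impI)
  fix i j assume i: "i < N" and j: "j < N"
  consider "j = k" | "j = K" | "i = k" "j \<noteq> k" "j \<noteq> K" | "i = K" "j \<noteq> k" "j \<noteq> K"
    | "i \<noteq> k" "i \<noteq> K" "j \<noteq> k" "j \<noteq> K" by blast
  then show "bil q (E i) (E j) = (if i + j = 2*n then pair_weight i else 0)"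
  proof cases
    case 1
    then show ?thesis using i bil_eichler_u[OF i] indices by (simp add: eichler_basis_at pair_weight_def)
  next
    case 2
    then show ?thesis
      using i F_carrier x_nonzero bil_eichler_F[OF i] indices eichler_basis_carrier[OF i]
      by (simp add: eichler_cases bil_smult_right pair_weight_def)
  next
    case 3
    then show ?thesis
      using j u bil_eichler_u[OF j] indices eichler_basis_carrier[OF j]
      by (simp add: eichler_basis_at bil_sym[of u])
  next
    case 4
    then show ?thesis
      using j F_carrier bil_eichler_F[OF j] indices indices(6)[OF j, unfolded add.commute[of j]]
        eichler_basis_carrier[OF j]
      by (simp add: eichler_cases bil_smult_left bil_sym[of F])
  next
    case 5
    then show ?thesis using i j B by (simp add: bil_eichler_other std_basis_bil)
  qed
qed (rule eichler_basis_carrier)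

end

context
  assumes u: "u \<in> lattice_span B" and x_unit: "v (bil q u (B (2*n - k))) = 0"
begin

private lemma u_carrier: "u \<in> carrier_vec N"
  using u lattice_span_carrier by blast

private lemma inverse_x_in_val_ring: "1 / x \<in> val_ring v"
  using x_nonzero x_unit by (intro divide_unit_in_val_ring) simp_all

private lemma coeff_in_val_ring: "i < N \<Longrightarrow> bil q u (B i) / x \<in> val_ring v"
  using B u x_nonzero x_unit by (intro divide_unit_in_val_ring bil_lattice_span_in_val_ring)

private lemma std_basis_E: "std_basis E"
  by (rule std_basis_eichler_basis[OF u_carrier])

private lemma E_in_lattice: "i < N \<Longrightarrow> E i \<in> lattice_span B"
  using u B indices(2) F_carrier coeff_in_val_ring inverse_x_in_val_ring
  by (auto simp: eichler_cases std_basis_carrier val_ring_uminus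
      intro!: lattice_span_add lattice_span_smult basis_in_lattice_span)

private lemma F_in_lattice_E: "F \<in> lattice_span E"
proof -
  have "x \<in> val_ring v"
    using B u indices(2) by (rule bil_lattice_span_in_val_ring)
  moreover have "E K \<in> lattice_span E"
    using std_basis_E indices(2) by (intro basis_in_lattice_span) (simp_all add: std_basis_carrier)
  ultimately have "x \<cdot>\<^sub>v E K \<in> lattice_span E"
    by (rule lattice_span_smult)
  moreover have "x \<cdot>\<^sub>v E K = F"
    using x_nonzero F_carrier indices(3)[symmetric] by (simp add: eichler_cases smult_smult_assoc)
  ultimately show ?thesis by simp
qed

private lemma basis_in_lattice_E_off: "i < N \<Longrightarrow> i \<noteq> k \<Longrightarrow> B i \<in> lattice_span E"
proof (cases "i = K")
  case False
  assume i: "i < N" "i \<noteq> k"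
  have "E i \<in> lattice_span E"
    using i std_basis_E by (intro basis_in_lattice_span) (simp_all add: std_basis_carrier)
  then have "E i + (bil q u (B i) / x) \<cdot>\<^sub>v F \<in> lattice_span E"
    using i F_in_lattice_E coeff_in_val_ring by (intro lattice_span_add lattice_span_smult)
  moreover have "E i + (bil q u (B i) / x) \<cdot>\<^sub>v F = B i"
    using i False std_basis_carrier[OF B i(1)] F_carrier by (intro eq_vecI) (auto simp: eichler_cases)
  ultimately show ?thesis by simp
qed (use F_in_lattice_E in simp)

text \<open>\<open>B k\<close> is recovered from \<open>u = x B k + (other terms)\<close>, because \<open>x\<close> is a unit.\<close>

private lemma basis_k_in_lattice_E: "B k \<in> lattice_span E"
proof -
  obtain c where c: "u = lin_comb N N c B" "\<forall>i<N. c i \<in> val_ring v"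
    using u unfolding lattice_span_def by blast
  have ck: "c k = x"
    using bil_lin_comb_std_basis[OF B indices(2), of c] c(1) indices(3)[symmetric] k by (simp add: pair_weight_def)
  define c' where "c' = (\<lambda>i. if i = k then 0 else c i)"
  define C where "C i = (if i = k then 0\<^sub>v N else B i)" for i
  define w where "w = lin_comb N N c' C"
  have kN: "k < N" using k by (simp add: less_dim_iff)
  have "u = lin_comb N N c' B + x \<cdot>\<^sub>v B k"
    using c(1) ck lin_comb_split[of k N B N c] kN std_basis_carrier[OF B kN] by (simp add: c'_def)
  also have "lin_comb N N c' B = lin_comb N N c' C"
    by (rule lin_comb_cong_nonzero) (auto simp: c'_def C_def)
  finally have u_eq: "u = w + x \<cdot>\<^sub>v B k" unfolding w_def .
  have "(1 / x) \<cdot>\<^sub>v (u + (-1) \<cdot>\<^sub>v w) = B k"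
  proof (rule eq_vecI)
    fix r assume "r < dim_vec (B k)"
    then have r: "r < N" using std_basis_carrier[OF B kN] by simp
    have "u $ r = w $ r + x * B k $ r"
      using arg_cong[OF u_eq, of "\<lambda>y. y $ r"] r std_basis_carrier[OF B kN] by (simp add: w_def)
    then show "((1 / x) \<cdot>\<^sub>v (u + (-1) \<cdot>\<^sub>v w)) $ r = B k $ r"
      using r x_nonzero u_carrier by (simp add: w_def field_simps)
  qed (use u_carrier std_basis_carrier[OF B kN] in \<open>simp add: w_def\<close>)
  moreover have "w \<in> lattice_span E"
    unfolding w_def using c(2) basis_in_lattice_E_off zero_in_lattice_span
    by (intro lin_comb_in_lattice_span) (auto simp: c'_def C_def)
  moreover have "u \<in> lattice_span E"
    using std_basis_E kN by (metis basis_in_lattice_span eichler_basis_at std_basis_carrier)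
  ultimately show ?thesis
    by (metis inverse_x_in_val_ring lattice_span_add lattice_span_smult val_ring_1 val_ring_uminus)
qed

lemma lattice_span_eichler_basis: "lattice_span (eichler_basis B k u) = lattice_span B"
proof
  show "lattice_span E \<subseteq> lattice_span B"
    by (rule lattice_span_subset) (rule E_in_lattice)
  show "lattice_span B \<subseteq> lattice_span E"
    using basis_k_in_lattice_E basis_in_lattice_E_off by (intro lattice_span_subset) blast
qed

end

end

end

section \<open>Isometries between standard bases\<close>

lemma smult_mat_mult_vec:
  fixes A :: "'a::comm_ring_1 mat"
  assumes "A \<in> carrier_mat nr nc" "x \<in> carrier_vec nc"
  shows "(s \<cdot>\<^sub>m A) *\<^sub>v x = s \<cdot>\<^sub>v (A *\<^sub>v x)"
  using assms by (intro eq_vecI) (auto simp: scalar_prod_def sum_distrib_left algebra_simps)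

context type_a_space
begin

definition basis_mat :: "(nat \<Rightarrow> 'a vec) \<Rightarrow> 'a mat" where
  "basis_mat B = mat_of_cols N (map B [0..<N])"

lemma basis_mat_carrier: "basis_mat B \<in> carrier_mat N N"
  using mat_of_cols_carrier(1)[of N "map B [0..<N]"] by (simp add: basis_mat_def)

lemma basis_mat_mult:
  assumes "c \<in> carrier_vec N"
  shows "basis_mat B *\<^sub>v c = lin_comb N N (\<lambda>i. c $ i) B"
proof -
  have "basis_mat B *\<^sub>v c = lin_comb N N (\<lambda>i. c $ i) (\<lambda>i. map B [0..<N] ! i)"
    using mat_of_cols_mult_vec[of c "map B [0..<N]" N] assms by (simp add: basis_mat_def)
  also have "\<dots> = lin_comb N N (\<lambda>i. c $ i) B"
    by (rule lin_comb_cong) simp_all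
  finally show ?thesis .
qed

lemma basis_mat_unit_vec:
  assumes "std_basis B" "i < N"
  shows "basis_mat B *\<^sub>v unit_vec N i = B i"
proof -
  have "basis_mat B *\<^sub>v unit_vec N i = lin_comb N N (\<lambda>j. if j = i then 1 else 0) B"
    using assms by (simp add: basis_mat_mult cong: lin_comb_cong)
  also have "\<dots> = B i"
    using lin_comb_single[of i N B N 1] assms by (simp add: std_basis_carrier)
  finally show ?thesis .
qed

lemma det_basis_mat_nonzero:
  assumes B: "std_basis B"
  shows "det (basis_mat B) \<noteq> 0"
proof
  assume "det (basis_mat B) = 0"
  then obtain c where c: "c \<in> carrier_vec N" "c \<noteq> 0\<^sub>v N" "basis_mat B *\<^sub>v c = 0\<^sub>v N"
    using det_0_iff_vec_prod_zero[OF basis_mat_carrier] by blast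
  then have "c $ i = 0" if "i < N" for i
    using std_basis_independent[OF B _ that, of "\<lambda>i. c $ i"] by (simp add: basis_mat_mult)
  then show False using c(1,2) by (metis eq_vecI index_zero_vec carrier_vecD)
qed

lemma exists_isometry_std_basis:
  assumes B1: "std_basis B1" and B2: "std_basis B2"
  obtains G where "G \<in> carrier_mat N N" "\<And>i. i < N \<Longrightarrow> G *\<^sub>v B1 i = B2 i"
    "\<forall>x\<in>carrier_vec N. q (G *\<^sub>v x) = q x"
proof -
  let ?P1 = "basis_mat B1" and ?P2 = "basis_mat B2"
  obtain P1' where P1': "P1' \<in> carrier_mat N N" "P1' * ?P1 = 1\<^sub>m N"
    using det_non_zero_imp_unit[OF basis_mat_carrier det_basis_mat_nonzero[OF B1], of undefined]
    unfolding Units_def ring_mat_def by auto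
  define G where "G = ?P2 * P1'"
  have G: "G \<in> carrier_mat N N" unfolding G_def by (rule mult_carrier_mat[OF basis_mat_carrier P1'(1)])
  have GB: "G *\<^sub>v B1 i = B2 i" if i: "i < N" for i
  proof -
    have "G *\<^sub>v B1 i = ?P2 *\<^sub>v (P1' *\<^sub>v (?P1 *\<^sub>v unit_vec N i))"
      using P1' basis_mat_carrier[of B2] i basis_mat_unit_vec[OF B1 i] std_basis_carrier[OF B1 i]
      by (simp add: G_def)
    also have "P1' *\<^sub>v (?P1 *\<^sub>v unit_vec N i) = (P1' * ?P1) *\<^sub>v unit_vec N i"
      by (rule assoc_mult_mat_vec[symmetric, OF P1'(1) basis_mat_carrier unit_vec_carrier])
    also have "\<dots> = unit_vec N i" using P1'(2) by simp
    also have "?P2 *\<^sub>v unit_vec N i = B2 i" using basis_mat_unit_vec[OF B2 i] .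
    finally show ?thesis .
  qed
  have "q (G *\<^sub>v x) = q x" if "x \<in> carrier_vec N" for x
  proof -
    obtain c where x: "x = lin_comb N N c B1" using std_basis_spans[OF B1 \<open>x \<in> carrier_vec N\<close>] by blast
    have "G *\<^sub>v x = lin_comb N N c B2"
      unfolding x using G GB B1 by (simp add: mult_mat_lin_comb std_basis_carrier cong: lin_comb_cong)
    then show ?thesis using x by (simp add: q_lin_comb_std_basis B1 B2)
  qed
  with G GB show ?thesis using that by blast
qed

lemma exists_SO_std_basis:
  assumes B1: "std_basis B1" and B2: "std_basis B2"
  obtains G \<epsilon> where "G \<in> SO_group N q" "\<epsilon> * \<epsilon> = 1" "\<And>i. i < N \<Longrightarrow> G *\<^sub>v B1 i = \<epsilon> \<cdot>\<^sub>v B2 i"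
proof -
  obtain G0 where G0: "G0 \<in> carrier_mat N N" "\<And>i. i < N \<Longrightarrow> G0 *\<^sub>v B1 i = B2 i"
    and isom: "\<forall>x\<in>carrier_vec N. q (G0 *\<^sub>v x) = q x"
    using exists_isometry_std_basis[OF B1 B2] by blast
  define \<epsilon> where "\<epsilon> = det G0"
  have eps: "\<epsilon> * \<epsilon> = 1"
    using isometry_det_square[OF G0(1) isom] by (simp add: \<epsilon>_def power2_eq_square)
  \<comment> \<open>\<open>N\<close> is odd, so rescaling by \<open>det G0 = \<plusminus>1\<close> makes the determinant \<open>1\<close>\<close>
  define G where "G = \<epsilon> \<cdot>\<^sub>m G0"
  have "det G = \<epsilon> ^ (2 * (n + 1))"
    using G0(1) dim_eq by (simp add: G_def \<epsilon>_def)
  also have "\<dots> = 1" using eps by (simp add: power_mult power2_eq_square)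
  finally have "det G = 1" .
  moreover have "q (G *\<^sub>v x) = q x" if "x \<in> carrier_vec N" for x
    using that G0(1) isom eps by (simp add: G_def smult_mat_mult_vec q_smult power2_eq_square)
  ultimately have "G \<in> SO_group N q"
    using G0(1) by (simp add: SO_group_def G_def)
  moreover have "G *\<^sub>v B1 i = \<epsilon> \<cdot>\<^sub>v B2 i" if "i < N" for i
    using that G0 B1 by (simp add: G_def smult_mat_mult_vec std_basis_carrier)
  ultimately show ?thesis using that eps by blast
qed

lemma image_lin_comb_sets:
  assumes G: "G \<in> carrier_mat N N" and B1: "std_basis B1" and B2: "std_basis B2"
    and GB: "\<And>i. i < N \<Longrightarrow> G *\<^sub>v B1 i = \<epsilon> \<cdot>\<^sub>v B2 i" and eps: "\<epsilon> * \<epsilon> = 1"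
    and K: "K \<le> N" and P: "\<And>c. P c \<Longrightarrow> P (\<lambda>i. \<epsilon> * c i)"
  shows "(\<lambda>x. G *\<^sub>v x) ` {lin_comb N K c B1 | c. P c} = {lin_comb N K c B2 | c. P c}"
proof -
  have image: "G *\<^sub>v lin_comb N K c B1 = lin_comb N K (\<lambda>i. \<epsilon> * c i) B2" for c
  proof -
    have "G *\<^sub>v lin_comb N K c B1 = lin_comb N K c (\<lambda>i. \<epsilon> \<cdot>\<^sub>v B2 i)"
      using G B1 GB K by (simp add: mult_mat_lin_comb std_basis_carrier cong: lin_comb_cong)
    also have "\<dots> = lin_comb N K (\<lambda>i. \<epsilon> * c i) B2"
    proof (rule eq_vecI)
      fix r assume "r < dim_vec (lin_comb N K (\<lambda>i. \<epsilon> * c i) B2)"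
      moreover have "dim_vec (B2 i) = N" if "i < K" for i
        using that K std_basis_carrier[OF B2, of i] by simp
      ultimately show "lin_comb N K c (\<lambda>i. \<epsilon> \<cdot>\<^sub>v B2 i) $ r = lin_comb N K (\<lambda>i. \<epsilon> * c i) B2 $ r"
        by (auto intro!: sum.cong)
    qed simp
    finally show ?thesis .
  qed
  have "lin_comb N K c B2 = G *\<^sub>v lin_comb N K (\<lambda>i. \<epsilon> * c i) B1" for c
    unfolding image using eps by (simp add: mult.assoc[symmetric] cong: lin_comb_cong)
  then show ?thesis
    using image P by blast
qed

lemma sign_in_val_ring: "\<epsilon> * \<epsilon> = 1 \<Longrightarrow> \<epsilon> \<in> val_ring v"
  by (metis square_eq_1_iff power2_eq_square val_ring_1 val_ring_uminus)

context
  fixes G B1 B2 \<epsilon>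
  assumes G: "G \<in> SO_group N q" and B1: "std_basis B1" and B2: "std_basis B2"
    and GB: "\<And>i. i < N \<Longrightarrow> G *\<^sub>v B1 i = \<epsilon> \<cdot>\<^sub>v B2 i" and eps: "\<epsilon> * \<epsilon> = 1"
begin

lemma image_lattice_span: "(\<lambda>x. G *\<^sub>v x) ` lattice_span B1 = lattice_span B2"
  using image_lin_comb_sets[of G B1 B2 \<epsilon> N "\<lambda>c. \<forall>i<N. c i \<in> val_ring v"] G B1 B2 GB eps
    sign_in_val_ring[OF eps]
  unfolding lattice_span_def by (auto simp: SO_group_def intro: val_ring_mult)

lemma image_span_first: "K \<le> N \<Longrightarrow> (\<lambda>x. G *\<^sub>v x) ` span_first K B1 = span_first K B2"
  using image_lin_comb_sets[of G B1 B2 \<epsilon> K "\<lambda>_. True"] G B1 B2 GB eps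
  unfolding span_first_def by (simp add: SO_group_def full_SetCompr_eq)

end

end

section \<open>Bases adapted to an isotropic flag\<close>

locale isotropic_flag = type_a_space +
  fixes W :: "nat \<Rightarrow> 'a vec set"
  assumes flag_dim: "\<And>i. i \<le> n \<Longrightarrow> subspace_dim N (W i) i"
    and flag_strict: "\<And>i. i < n \<Longrightarrow> W i \<subset> W (Suc i)"
    and flag_isotropic: "totally_isotropic N q (W n)"
    and val_a: "v a \<le> 1"
begin

definition flag_adapted :: "nat \<Rightarrow> (nat \<Rightarrow> 'a vec) \<Rightarrow> bool" where
  "flag_adapted K B \<longleftrightarrow> (\<forall>i\<le>K. W i = span_first i B)"

lemma flag_subspace: "i \<le> n \<Longrightarrow> is_subspace N (W i)"
  using flag_dim unfolding subspace_dim_def by blast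

lemma flag_mono: "i \<le> j \<Longrightarrow> j \<le> n \<Longrightarrow> W i \<subseteq> W j"
proof (induction j)
  case (Suc j)
  then show ?case using flag_strict[of j] by (cases "i = Suc j") auto
qed simp

lemma flag_q: "x \<in> W n \<Longrightarrow> q x = 0"
  using flag_isotropic unfolding totally_isotropic_def by blast

lemma flag_bil: "x \<in> W n \<Longrightarrow> y \<in> W n \<Longrightarrow> bil q x y = 0"
  using flag_subspace[of n] by (simp add: bil_def flag_q is_subspace_def)

lemma flag_adapted_0:
  assumes "std_basis B"
  shows "flag_adapted 0 B"
  using subspace_eq_span_first[OF flag_dim[of 0] _ assms] unfolding flag_adapted_def by simp

lemma flag_adapted_basis_in:
  assumes B: "std_basis B" and adapted: "flag_adapted k B" and k: "k \<le> n" and i: "i < k"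
  shows "B i \<in> W k"
proof -
  have iN: "i < N" using i k by (simp add: less_dim_iff)
  have "B i = lin_comb N k (\<lambda>j. if j = i then 1 else 0) B"
    using lin_comb_single[of i k B N 1] i std_basis_carrier[OF B iN] by simp
  then show ?thesis
    using adapted unfolding flag_adapted_def span_first_def by auto
qed

lemma flag_adapted_Suc:
  assumes B': "std_basis B'" and B: "std_basis B" and adapted: "flag_adapted k B" and k: "k < n"
    and below: "\<And>i. i < k \<Longrightarrow> B' i = B i" and new: "B' k \<in> W (Suc k)"
  shows "flag_adapted (Suc k) B'"
  unfolding flag_adapted_def
proof (intro allI impI)
  fix i assume "i \<le> Suc k"
  then consider "i \<le> k" | "i = Suc k" by linarith
  then show "W i = span_first i B'"
  proof cases
    case 1
    then show ?thesis
      using adapted below span_first_cong[of i B' B] unfolding flag_adapted_def by simp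
  next
    case 2
    have "B' j \<in> W (Suc k)" if "j < Suc k" for j
      using that new below flag_adapted_basis_in[OF B adapted] flag_mono[of k "Suc k"] k
      by (cases "j = k") auto
    moreover have "Suc k \<le> N" using k dim_eq by simp
    ultimately show ?thesis
      using 2 k flag_dim[of "Suc k"] B' by (intro subspace_eq_span_first) auto
  qed
qed

lemma flag_coeff_zero_high:
  assumes B: "std_basis B" and adapted: "flag_adapted k B" and k: "k \<le> n"
    and w: "lin_comb N N c B \<in> W n" and i: "i < N" "2*n - k < i"
  shows "c i = 0"
proof -
  have j: "2*n - i < k" "2*n - i < N" using i k by (auto simp: less_dim_iff)
  have "B (2*n - i) \<in> W n"
    using flag_adapted_basis_in[OF B adapted k j(1)] flag_mono[OF k order.refl] by auto
  with w have "bil q (lin_comb N N c B) (B (2*n - i)) = 0" by (rule flag_bil)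
  then show ?thesis
    using bil_lin_comb_std_basis[OF B j(2), of c] i pair_weight_nonzero by (simp add: less_dim_iff)
qed

lemma flag_step_vector:
  assumes B: "std_basis B" and k: "k < n" and adapted: "flag_adapted k B"
  obtains c where "lin_comb N N c B \<in> W (Suc k)" "\<exists>i<N. c i \<noteq> 0"
    "\<And>i. i < N \<Longrightarrow> i < k \<or> 2*n - k < i \<Longrightarrow> c i = 0"
proof -
  have S: "is_subspace N (W (Suc k))" using k by (intro flag_subspace) simp
  obtain w where w: "w \<in> W (Suc k)" "w \<notin> W k" using flag_strict[OF k] by blast
  then have "w \<in> carrier_vec N" using S by (auto simp: is_subspace_def)
  then obtain c where c: "w = lin_comb N N c B" using std_basis_spans[OF B] by blast
  have kN: "k \<le> N" using k dim_eq by simp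
  have low: "lin_comb N k c B \<in> W k"
    using adapted unfolding flag_adapted_def span_first_def by auto
  \<comment> \<open>subtracting the part of \<open>w\<close> in \<open>W k\<close> kills the coefficients below \<open>k\<close>\<close>
  define c' where "c' i = (if i < k then 0 else c i)" for i
  have "w = lin_comb N N (\<lambda>i. c' i + (if i < k then c i else 0)) B"
    unfolding c by (rule lin_comb_cong) (auto simp: c'_def)
  also have "\<dots> = lin_comb N N c' B + lin_comb N k c B"
    by (simp only: lin_comb_extend[OF kN, of N c B] lin_comb_add)
  finally have split: "w = lin_comb N N c' B + lin_comb N k c B" .
  then have "lin_comb N N c' B = w + (-1) \<cdot>\<^sub>v lin_comb N k c B"
    by (intro eq_vecI) auto
  moreover have "lin_comb N k c B \<in> W (Suc k)"
    using low flag_mono[of k "Suc k"] k by auto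
  ultimately have c'W: "lin_comb N N c' B \<in> W (Suc k)"
    using w(1) S by (simp add: is_subspace_def)
  have nonzero: "\<exists>i<N. c' i \<noteq> 0"
  proof (rule ccontr)
    assume "\<not> ?thesis"
    then have "lin_comb N N c' B = 0\<^sub>v N" by (simp add: lin_comb_cong[of N c' "\<lambda>_. 0"])
    then show False using split w(2) low by simp
  qed
  have c'n: "lin_comb N N c' B \<in> W n" using c'W flag_mono[of "Suc k" n] k by auto
  have "c' i = 0" if "i < N" "i < k \<or> 2*n - k < i" for i
  proof (cases "i < k")
    case False
    then show ?thesis using that flag_coeff_zero_high[OF B adapted _ c'n] k by simp
  qed (simp add: c'_def)
  then show ?thesis by (rule that[OF c'W nonzero])
qed

lemma flag_primitive_vector:
  assumes B: "std_basis B" and k: "k < n" and adapted: "flag_adapted k B"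
  obtains d p where "\<forall>i<N. d i \<in> val_ring v" "lin_comb N N d B \<in> W (Suc k)"
    "k \<le> p" "p \<le> 2*n - k" "p \<noteq> n" "d p \<noteq> 0" "v (d p) = 0"
proof -
  obtain c where cW: "lin_comb N N c B \<in> W (Suc k)" and nonzero: "\<exists>i<N. c i \<noteq> 0"
    and c_zero: "\<And>i. i < N \<Longrightarrow> i < k \<or> 2*n - k < i \<Longrightarrow> c i = 0"
    using flag_step_vector[OF B k adapted] by blast
  from nonzero have "\<exists>i\<in>{..<N}. c i \<noteq> 0" by blast
  then obtain m where "m \<in> {..<N}" "c m \<noteq> 0" "\<forall>i\<in>{..<N}. c i / c m \<in> val_ring v"
    by (rule exists_min_val_divisor[OF finite_lessThan])
  then have m: "m < N" "c m \<noteq> 0" and c_div: "\<forall>i<N. c i / c m \<in> val_ring v" by auto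
  define d where "d = (\<lambda>i. c i / c m)"
  have d_int: "\<forall>i<N. d i \<in> val_ring v" using c_div by (simp add: d_def)
  have "lin_comb N N d B = (1 / c m) \<cdot>\<^sub>v lin_comb N N c B"
    unfolding lin_comb_smult by (rule lin_comb_cong) (simp_all add: d_def)
  then have dW: "lin_comb N N d B \<in> W (Suc k)"
    using cW flag_subspace[of "Suc k"] k by (simp add: is_subspace_def)
  then have "q (lin_comb N N d B) = 0" using flag_mono[of "Suc k" n] k by (auto intro: flag_q)
  then obtain p where p: "p < N" "p \<noteq> n" "d p \<noteq> 0" "v (d p) = 0"
    using isotropic_unit_coeff[OF B val_a d_int m(1)] m by (auto simp: d_def)
  have "\<not> (p < k \<or> 2*n - k < p)"
    using c_zero[OF p(1)] p(3) by (auto simp: d_def)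
  then have "k \<le> p" "p \<le> 2*n - k" by simp_all
  then show ?thesis using that[OF d_int dW] p(2-4) by blast
qed

lemma flag_adapted_step:
  assumes B: "std_basis B" and k: "k < n" and adapted: "flag_adapted k B"
  obtains B' where "std_basis B'" "lattice_span B' = lattice_span B" "flag_adapted (Suc k) B'"
proof -
  obtain d p where d_int: "\<forall>i<N. d i \<in> val_ring v" and uW: "lin_comb N N d B \<in> W (Suc k)"
    and p: "k \<le> p" "p \<le> 2*n - k" "p \<noteq> n" "d p \<noteq> 0" "v (d p) = 0"
    using flag_primitive_vector[OF B k adapted] by blast
  define u where "u = lin_comb N N d B"
  have u_n: "u \<in> W n" using uW flag_mono[of "Suc k" n] k by (auto simp: u_def)
  obtain \<tau> where \<tau>: "pairing_involution n \<tau>" "\<tau> k = p" "\<forall>i<k. \<tau> i = i"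
    using exists_pairing_involution k p(1-3) by blast
  define B1 where "B1 = B \<circ> \<tau>"
  have B1: "std_basis B1" "lattice_span B1 = lattice_span B"
    unfolding B1_def using std_basis_permute[OF \<tau>(1) B] lattice_span_permute[OF \<tau>(1)] by auto
  have "B1 (2*n - k) = B (2*n - p)"
    using pairing_involution_less(3)[OF \<tau>(1), of k] \<tau>(2) k by (simp add: B1_def less_dim_iff)
  then have "bil q u (B1 (2*n - k)) = d p"
    using bil_lin_comb_std_basis[OF B, of "2*n - p" d] p by (simp add: u_def less_dim_iff pair_weight_def)
  then have x_unit: "bil q u (B1 (2*n - k)) \<noteq> 0" "v (bil q u (B1 (2*n - k))) = 0"
    using p(4,5) by simp_all
  have u_lattice: "u \<in> lattice_span B1"
    using d_int B1(2) unfolding u_def lattice_span_def by auto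
  have u_iso: "q u = 0" by (rule flag_q[OF u_n])
  define B' where "B' = eichler_basis B1 k u"
  have "std_basis B'"
    unfolding B'_def using u_lattice lattice_span_carrier
    by (blast intro: std_basis_eichler_basis[OF B1(1) k u_iso x_unit(1)])
  moreover have "lattice_span B' = lattice_span B1"
    unfolding B'_def by (rule lattice_span_eichler_basis[OF B1(1) k u_iso x_unit(1) u_lattice x_unit(2)])
  moreover have "B' i = B i" if "i < k" for i
  proof -
    have "B i \<in> W n"
      using flag_adapted_basis_in[OF B adapted _ that] flag_mono[of k n] k by auto
    then have "bil q u (B1 i) = 0" using that \<tau>(3) flag_bil[OF u_n] by (simp add: B1_def)
    then show ?thesis using that \<tau>(3) B1(1) k by (simp add: B'_def eichler_basis_below B1_def)
  qed
  moreover have "B' k \<in> W (Suc k)" using uW by (simp add: B'_def u_def eichler_basis_at)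
  ultimately show ?thesis
    using that B1(2) flag_adapted_Suc[OF _ B adapted k] by auto
qed

lemma exists_flag_adapted_basis:
  assumes B: "std_basis B" and K: "K \<le> n"
  shows "\<exists>B'. std_basis B' \<and> lattice_span B' = lattice_span B \<and> flag_adapted K B'"
  using K
proof (induction K)
  case 0
  then show ?case using B flag_adapted_0 by blast
next
  case (Suc K)
  then obtain B1 where "std_basis B1" "lattice_span B1 = lattice_span B" "flag_adapted K B1"
    by auto
  with flag_adapted_step[of B1 K] Suc.prems show ?case by (metis Suc_le_lessD)
qed

end

theorem proposition3p7p6:
  fixes v :: "'a::field_char_0 \<Rightarrow> int"
    and q :: "'a vec \<Rightarrow> 'a"
    and n :: nat and a :: 'a
    and L1 L2 W :: "'a vec set"
    and Wf :: "nat \<Rightarrow> 'a vec set"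
  assumes "nonarch_local_field v"
    and "quadratic_space (2*n+1) q"
    and "witt_index (2*n+1) q n"
    and "a \<in> val_ring v" and "a \<noteq> 0" and "v a \<in> {0, 1}"
    and "lattice_of_type v (2*n+1) q n a L1"
    and "lattice_of_type v (2*n+1) q n a L2"
    and "totally_isotropic (2*n+1) q W"
    and "\<forall>i\<le>n. subspace_dim (2*n+1) (Wf i) i"
    and "\<forall>i<n. Wf i \<subset> Wf (Suc i)"
    and "Wf n = W"
  shows "\<exists>G\<in>SO_group (2*n+1) q. (\<lambda>x. G *\<^sub>v x) ` L1 = L2 \<and>
           (\<forall>i\<in>{1..n}. (\<lambda>x. G *\<^sub>v x) ` Wf i = Wf i)"
proof -
  interpret isotropic_flag v "2*n+1" q n a Wf
    using assms by unfold_locales (auto simp: nonarch_local_field_def quadratic_space_def)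
  obtain B1 B2 where B1: "std_basis B1" "L1 = lattice_span B1" and B2: "std_basis B2" "L2 = lattice_span B2"
    using lattice_of_type_std_basis assms(7,8) by metis
  obtain C1 C2 where C1: "std_basis C1" "lattice_span C1 = L1" "flag_adapted n C1"
    and C2: "std_basis C2" "lattice_span C2 = L2" "flag_adapted n C2"
    using exists_flag_adapted_basis[OF B1(1) order.refl] exists_flag_adapted_basis[OF B2(1) order.refl] B1 B2
    by metis
  obtain G \<epsilon> where G: "G \<in> SO_group (2*n+1) q" "\<epsilon> * \<epsilon> = 1" "\<And>i. i < 2*n+1 \<Longrightarrow> G *\<^sub>v C1 i = \<epsilon> \<cdot>\<^sub>v C2 i"
    using exists_SO_std_basis[OF C1(1) C2(1)] by blast
  have "(\<lambda>x. G *\<^sub>v x) ` L1 = L2"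
    using image_lattice_span[OF G(1) C1(1) C2(1) G(3) G(2)] C1(2) C2(2) by simp
  moreover have "(\<lambda>x. G *\<^sub>v x) ` Wf i = Wf i" if "i \<in> {1..n}" for i
    using image_span_first[OF G(1) C1(1) C2(1) G(3) G(2), of i] C1(3) C2(3) that
    unfolding flag_adapted_def by simp
  ultimately show ?thesis using G(1) by blast
qed

end
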